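(* Let $f:\mathbb{R}^n_{>0}\to\mathbb{R}^n_{>0}$ be in the class $\mathcal{M}_+$. Then $f$ has an eigenvector in $\mathbb{R}^n_{>0}$ if and only if $f$ is strongly nonnegative. If $f$ does have an eigenvector in $\mathbb{R}^n_{>0}$, then it is unique up to scaling if and only if $\mathcal{G}(f)$ has a unique final class.
   Context: For $r\in\mathbb{R}$ and a probability vector $\sigma\in\mathbb{R}^n_{\ge0}$ ($\sum_i\sigma_i=1$), the $(r,\sigma)$-mean of $x\in\mathbb{R}^n_{\ge0}$ is $M_{r\sigma}(x)=(\sum_i\sigma_ix_i^r)^{1/r}$ if $r\ne0$, and $M_{0\sigma}(x)=\prod_{i:\sigma_i>0}x_i^{\sigma_i}$. Class $M_+$: maps $f:\mathbb{R}^n_{\ge0}\to\mathbb{R}^n_{>0}$ each of whose entries is a positive linear combination of $(r,\sigma)$-means with $r\ge0$. Class $\mathcal{M}_+$: the smallest class of maps $\mathbb{R}^n_{\ge0}\to\mathbb{R}^n_{\ge0}$ containing $M_+$ and closed under addition and composition; $f$ in the claim is (the restriction to $\mathbb{R}^n_{>0}$ of) such a map. Such $f$ are order-preserving and homogeneous. $P^J_0(x)_j=x_j$ for $j\in J$, $0$ otherwise; $f^J_0=P^J_0fP^J_0$; $r(g)=\inf_{x\in\mathbb{R}^n_{>0}}\max_ig(x)_i/x_i$. $\mathcal{G}(f)$ is the directed graph on $[n]$ with an arc $i\to j$ when $\lim_{t\to\infty}f(\exp(te_{\{j\}}))_i=\infty$. A final class is a strongly connected component with no arcs leaving it. $f$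 is strongly nonnegative if $r(f^C_0)=r(f)$ for every final class $C$ and $r(f^C_0)<r(f)$ for every non-final strongly connected component $C$. An eigenvector of $f$ in $\mathbb{R}^n_{>0}$ is $x\in\mathbb{R}^n_{>0}$ with $f(x)=\mu x$. *)

theory Defs
  imports "HOL-Analysis.Analysis"
begin

definition prob_vec :: "real^'n \<Rightarrow> bool" where
  "prob_vec \<sigma> \<longleftrightarrow> (\<forall>i. \<sigma> $ i \<ge> 0) \<and> (\<Sum>i\<in>UNIV. \<sigma> $ i) = 1"

definition rmean :: "real \<Rightarrow> real^'n \<Rightarrow> real^'n \<Rightarrow> real" where
  "rmean r \<sigma> x =
     (if r \<noteq> 0 then (\<Sum>i\<in>UNIV. \<sigma> $ i * x $ i powr r) powr (1 / r)
      else (\<Prod>i\<in>{i. \<sigma> $ i > 0}. x $ i powr \<sigma> $ i))"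

definition nonneg_vec :: "real^'n \<Rightarrow> bool" where
  "nonneg_vec x \<longleftrightarrow> (\<forall>i. x $ i \<ge> 0)"

definition pos_vec :: "real^'n \<Rightarrow> bool" where
  "pos_vec x \<longleftrightarrow> (\<forall>i. x $ i > 0)"

definition Mplus :: "(real^'n \<Rightarrow> real^'n) set" where
  "Mplus = {f. \<forall>i. \<exists>(K::nat) c r \<sigma>. K > 0 \<and>
       (\<forall>k<K. c k > 0 \<and> r k \<ge> 0 \<and> prob_vec (\<sigma> k)) \<and>
       (\<forall>x. nonneg_vec x \<longrightarrow> f x $ i = (\<Sum>k<K. c k * rmean (r k) (\<sigma> k) x))}"

text \<open>Class \<M>_+: smallest class containing M_+ closed under addition and composition.\<close>
inductive_set Mplus_cl :: "(real^'n \<Rightarrow> real^'n) set" where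
  base: "f \<in> Mplus \<Longrightarrow> f \<in> Mplus_cl"
| add: "f \<in> Mplus_cl \<Longrightarrow> g \<in> Mplus_cl \<Longrightarrow> (\<lambda>x. f x + g x) \<in> Mplus_cl"
| comp: "f \<in> Mplus_cl \<Longrightarrow> g \<in> Mplus_cl \<Longrightarrow> f \<circ> g \<in> Mplus_cl"

definition proj0 :: "'n set \<Rightarrow> real^'n \<Rightarrow> real^'n" where
  "proj0 J x = (\<chi> j. if j \<in> J then x $ j else 0)"

definition restr0 :: "(real^'n \<Rightarrow> real^'n) \<Rightarrow> 'n set \<Rightarrow> real^'n \<Rightarrow> real^'n" where
  "restr0 f J = proj0 J \<circ> f \<circ> proj0 J"

definition cone_r :: "(real^'n \<Rightarrow> real^'n) \<Rightarrow> real" where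
  "cone_r g = Inf ((\<lambda>x. Max (range (\<lambda>i. g x $ i / x $ i))) ` {x. pos_vec x})"

definition exp_unit :: "real \<Rightarrow> 'n \<Rightarrow> real^'n" where
  "exp_unit t j = (\<chi> k. if k = j then exp t else 1)"

definition arc :: "(real^'n \<Rightarrow> real^'n) \<Rightarrow> 'n \<Rightarrow> 'n \<Rightarrow> bool" where
  "arc f i j \<longleftrightarrow> filterlim (\<lambda>t. f (exp_unit t j) $ i) at_top at_top"

definition reach :: "(real^'n \<Rightarrow> real^'n) \<Rightarrow> 'n \<Rightarrow> 'n \<Rightarrow> bool" where
  "reach f i j \<longleftrightarrow> (i, j) \<in> {(a, b). arc f a b}\<^sup>*"

definition scc :: "(real^'n \<Rightarrow> real^'n) \<Rightarrow> 'n set \<Rightarrow> bool" where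
  "scc f C \<longleftrightarrow> (\<exists>i. C = {j. reach f i j \<and> reach f j i})"

definition final_class :: "(real^'n \<Rightarrow> real^'n) \<Rightarrow> 'n set \<Rightarrow> bool" where
  "final_class f C \<longleftrightarrow> scc f C \<and> (\<forall>i j. i \<in> C \<and> arc f i j \<longrightarrow> j \<in> C)"

definition strongly_nonneg :: "(real^'n \<Rightarrow> real^'n) \<Rightarrow> bool" where
  "strongly_nonneg f \<longleftrightarrow>
     (\<forall>C. final_class f C \<longrightarrow> cone_r (restr0 f C) = cone_r f) \<and>
     (\<forall>C. scc f C \<and> \<not> final_class f C \<longrightarrow> cone_r (restr0 f C) < cone_r f)"

definition pos_eigvec :: "(real^'n \<Rightarrow> real^'n) \<Rightarrow> real^'n \<Rightarrow> bool" where
  "pos_eigvec f x \<longleftrightarrow> pos_vec x \<and> (\<exists>\<mu>. f x = \<mu> *\<^sub>R x)"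

end

theory Submission
  imports Defs
begin

(* Every map of the class is admissible: each coordinate f_i is monotone, homogeneous and
   continuous on the cone, depends exactly on a set D i of coordinates, is strictly increasing
   in them and grows at least like a power of each of them. This survives sums and compositions
   and holds for the means, and the graph of f has an arc i -> j exactly when j \<in> D i.

   Necessity: for a positive eigenvector x with eigenvalue r(f), the Collatz-Wielandt formula
   gives r(f_C) = r(f) on every final class, while on a non-final class x can be lowered along
   the arcs leaving the class into a strict supersolution, so r(f_C) < r(f).

   Sufficiency: adding the classes in an order compatible with the arcs, one keeps a positive
   subsolution below a supersolution of f x = r(f) x. A final class contributes an eigenvector of
   its restriction (by compactness, using a Harnack-type bound), a non-final class a
   supersolution from r(f_C) < r(f) and a subsolution made of powers of a small parameter.
   Knaster-Tarski between the two then gives the eigenvector.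

   Uniqueness: the contact set of two eigenvectors is closed and hence contains a final class;
   conversely, with two final classes there is an eigenvector between x and x doubled on one of
   them, which is not a multiple of x. *)

lemma nonneg_vec_mono: "nonneg_vec x \<Longrightarrow> x \<le> y \<Longrightarrow> nonneg_vec y"
  unfolding nonneg_vec_def less_eq_vec_def by (meson order_trans)

lemma pos_imp_nonneg_vec: "pos_vec x \<Longrightarrow> nonneg_vec x"
  unfolding nonneg_vec_def pos_vec_def by (simp add: less_imp_le)

lemma nonneg_vec_scaleR: "nonneg_vec x \<Longrightarrow> 0 \<le> t \<Longrightarrow> nonneg_vec (t *\<^sub>R x)"
  by (simp add: nonneg_vec_def)

lemma pos_vec_one: "pos_vec 1"
  by (simp add: pos_vec_def)

lemma nonneg_vec_one: "nonneg_vec 1"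
  by (simp add: nonneg_vec_def)

lemma pos_vec_min_bound:
  assumes "pos_vec x"
  obtains m where "0 < m" "\<And>k. m \<le> x$k"
proof
  show "0 < Min (range (\<lambda>k. x$k))"
    using assms by (simp add: pos_vec_def)
  show "Min (range (\<lambda>k. x$k)) \<le> x$k" for k
    by (rule Min_le) auto
qed

lemma finite_arg_minE:
  fixes h :: "'a \<Rightarrow> 'b::linorder"
  assumes "finite A" "A \<noteq> {}"
  obtains k where "k \<in> A" "\<And>i. i \<in> A \<Longrightarrow> h k \<le> h i"
proof
  show "arg_min_on h A \<in> A" using assms by (rule arg_min_if_finite)
  show "h (arg_min_on h A) \<le> h i" if "i \<in> A" for i
    using assms that by (rule arg_min_least)
qed

lemma finite_subset_grow_induct:
  assumes "finite C" "P {}" and step: "\<And>T. T \<subset> C \<Longrightarrow> P T \<Longrightarrow> \<exists>T'. T \<subset> T' \<and> T' \<subseteq> C \<and> P T'"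
  shows "P C"
proof -
  have "\<forall>T. card (C - T) = n \<longrightarrow> T \<subseteq> C \<longrightarrow> P T \<longrightarrow> P C" for n
  proof (induction n rule: less_induct)
    case (less n)
    show ?case
    proof (intro allI impI)
      fix T assume T: "card (C - T) = n" "T \<subseteq> C" "P T"
      show "P C"
      proof (cases "T = C")
        case True
        then show ?thesis using T(3) by simp
      next
        case False
        then have "T \<subset> C" using T(2) by blast
        then obtain T' where T': "T \<subset> T'" "T' \<subseteq> C" "P T'"
          using step[OF _ T(3)] by blast
        then have "C - T' \<subset> C - T" by blast
        then have "card (C - T') < n"
          using \<open>finite C\<close> T(1) by (metis finite_Diff psubset_card_mono)
        then show ?thesis using less.IH T'(2,3) by blast
      qed
    qed
  qed
  then show ?thesis using assms(2) by blast
qed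

lemma eventually_at_right_0_small: "0 < b \<Longrightarrow> \<forall>\<^sub>F \<delta> in at_right (0::real). 0 < \<delta> \<and> \<delta> \<le> b"
  unfolding eventually_at_right_field by (intro exI[of _ b]) auto

lemma eventually_powr_dominated:
  fixes \<mu> c e A :: real
  assumes "0 < e" "0 < \<mu>" "0 < c"
  shows "\<forall>\<^sub>F \<delta> in at_right 0. \<mu> * \<delta> powr (A + e) \<le> c * \<delta> powr A"
proof -
  have "((\<lambda>\<delta>::real. \<delta> powr e) \<longlongrightarrow> 0) (at_right 0)"
    using \<open>0 < e\<close> eventually_at_right_less[of 0]
    by (intro tendsto_zero_powrI tendsto_ident_at tendsto_const) (auto elim: eventually_mono)
  then have "\<forall>\<^sub>F \<delta> in at_right 0. \<delta> powr e < c / \<mu>"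
    using assms by (intro order_tendstoD) auto
  then show ?thesis
  proof (rule eventually_mono)
    fix \<delta> :: real assume "\<delta> powr e < c / \<mu>"
    then have "\<mu> * \<delta> powr e * \<delta> powr A \<le> c * \<delta> powr A"
      using \<open>0 < \<mu>\<close> by (intro mult_right_mono) (auto simp: field_simps)
    then show "\<mu> * \<delta> powr (A + e) \<le> c * \<delta> powr A"
      by (simp add: powr_add mult.commute mult.left_commute)
  qed
qed

lemma powr_interpolation_le_imp_le:
  fixes m X :: real
  assumes "0 < m" "0 \<le> X" "0 < \<kappa>" "0 < \<theta>" and le: "\<kappa> * m powr (1 - \<theta>) * X powr \<theta> \<le> c * m"
  shows "X \<le> (c / \<kappa>) powr (1 / \<theta>) * m"
proof -
  have "0 \<le> c / \<kappa>"
    using le assms by (smt (verit) divide_nonneg_pos mult_pos_pos powr_ge_zero powr_gt_zero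
        zero_le_mult_iff)
  have "X = (X powr \<theta>) powr (1 / \<theta>)"
    using \<open>0 \<le> X\<close> \<open>0 < \<theta>\<close> by (simp add: powr_powr)
  also have "\<dots> \<le> (c / \<kappa> * m powr \<theta>) powr (1 / \<theta>)"
    using le assms(1,3,4) by (intro powr_mono2) (auto simp: powr_diff field_simps)
  also have "\<dots> = (c / \<kappa>) powr (1 / \<theta>) * (m powr \<theta>) powr (1 / \<theta>)"
    by (rule powr_mult)
  also have "\<dots> = (c / \<kappa>) powr (1 / \<theta>) * m"
    using \<open>0 < m\<close> \<open>0 < \<theta>\<close> by (simp add: powr_powr)
  finally show ?thesis .
qed

section \<open>Admissible functions\<close>

text \<open>g grows at least like the \<theta>-th power of its j-th argument once the arguments in S are
  bounded below by m; the factor m powr (1 - \<theta>) keeps the bound homogeneous of degree one.\<close>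

definition power_growth :: "(real^'n \<Rightarrow> real) \<Rightarrow> 'n set \<Rightarrow> 'n \<Rightarrow> real \<Rightarrow> real \<Rightarrow> bool" where
  "power_growth g S j \<kappa> \<theta> \<longleftrightarrow>
     (\<forall>x m. nonneg_vec x \<longrightarrow> 0 < m \<longrightarrow> (\<forall>k\<in>S. m \<le> x$k) \<longrightarrow>
        \<kappa> * m powr (1 - \<theta>) * x$j powr \<theta> \<le> g x)"

lemma power_growthD:
  "power_growth g S j \<kappa> \<theta> \<Longrightarrow> nonneg_vec x \<Longrightarrow> 0 < m \<Longrightarrow> (\<And>k. k \<in> S \<Longrightarrow> m \<le> x$k) \<Longrightarrow>
    \<kappa> * m powr (1 - \<theta>) * x$j powr \<theta> \<le> g x"
  unfolding power_growth_def by blast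

lemma power_growth_mono:
  assumes "power_growth g S j \<kappa> \<theta>" "S \<subseteq> T" "\<And>x. nonneg_vec x \<Longrightarrow> g x \<le> h x"
  shows "power_growth h T j \<kappa> \<theta>"
  using assms unfolding power_growth_def by (meson order_trans subsetD)

lemma power_growth_scale:
  assumes "power_growth g S j \<kappa> \<theta>" "0 < c"
  shows "power_growth (\<lambda>x. c * g x) S j (c * \<kappa>) \<theta>"
  using assms unfolding power_growth_def by (simp add: mult.assoc)

lemma power_growth_weaken:
  fixes g :: "real^'n \<Rightarrow> real"
  assumes g: "power_growth g S j \<kappa> \<theta>" and "j \<in> S" "0 < \<kappa>'" "\<kappa>' \<le> \<kappa>" "\<theta>' \<le> \<theta>"
  shows "power_growth g S j \<kappa>' \<theta>'"
  unfolding power_growth_def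
proof (intro allI impI)
  fix x :: "real^'n" and m :: real
  assume x: "nonneg_vec x" and m: "0 < m" and lb: "\<forall>k\<in>S. m \<le> x$k"
  have xj: "m \<le> x$j" using lb \<open>j \<in> S\<close> by blast
  have "m powr (1 - \<theta>') * x$j powr \<theta>' = m * (x$j / m) powr \<theta>'"
    using m xj by (simp add: powr_diff powr_divide field_simps)
  also have "\<dots> \<le> m * (x$j / m) powr \<theta>"
    using m xj \<open>\<theta>' \<le> \<theta>\<close> by (intro mult_left_mono powr_mono) auto
  also have "\<dots> = m powr (1 - \<theta>) * x$j powr \<theta>"
    using m xj by (simp add: powr_diff powr_divide field_simps)
  finally have "\<kappa>' * (m powr (1 - \<theta>') * x$j powr \<theta>') \<le> \<kappa> * (m powr (1 - \<theta>) * x$j powr \<theta>)"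
    using assms by (auto intro: mult_mono)
  also have "\<dots> \<le> g x" using power_growthD[OF g x m] lb by (simp add: mult.assoc)
  finally show "\<kappa>' * m powr (1 - \<theta>') * x$j powr \<theta>' \<le> g x" by (simp add: mult.assoc)
qed

locale admissible_fun =
  fixes g :: "real^'n \<Rightarrow> real" and S :: "'n set"
  assumes nonneg: "nonneg_vec x \<Longrightarrow> 0 \<le> g x"
    and mono: "nonneg_vec x \<Longrightarrow> x \<le> y \<Longrightarrow> g x \<le> g y"
    and homogeneous: "nonneg_vec x \<Longrightarrow> 0 < t \<Longrightarrow> g (t *\<^sub>R x) = t * g x"
    and continuous: "continuous_on {x. nonneg_vec x} g"
    and depends_on: "nonneg_vec x \<Longrightarrow> nonneg_vec y \<Longrightarrow> (\<And>j. j \<in> S \<Longrightarrow> x$j = y$j) \<Longrightarrow> g x = g y"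
    and strict_mono: "j \<in> S \<Longrightarrow> nonneg_vec x \<Longrightarrow> pos_vec y \<Longrightarrow> x \<le> y \<Longrightarrow> x$j < y$j \<Longrightarrow> g x < g y"
    and one_pos: "0 < g 1"
    and growth: "j \<in> S \<Longrightarrow> \<exists>\<kappa> \<theta>. 0 < \<kappa> \<and> 0 < \<theta> \<and> \<theta> \<le> 1 \<and> power_growth g S j \<kappa> \<theta>"

lemma admissible_fun_cong:
  fixes g h :: "real^'n \<Rightarrow> real"
  assumes "admissible_fun g S" and h: "\<And>x. nonneg_vec x \<Longrightarrow> h x = g x"
  shows "admissible_fun h S"
proof -
  interpret admissible_fun g S by fact
  show ?thesis
  proof
    fix x y :: "real^'n" and t :: real and j
    show "nonneg_vec x \<Longrightarrow> 0 \<le> h x"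
      by (simp add: h nonneg)
    show "nonneg_vec x \<Longrightarrow> x \<le> y \<Longrightarrow> h x \<le> h y"
      using mono nonneg_vec_mono[of x y] by (simp add: h)
    show "nonneg_vec x \<Longrightarrow> 0 < t \<Longrightarrow> h (t *\<^sub>R x) = t * h x"
      using homogeneous nonneg_vec_scaleR[of x t] by (simp add: h)
    show "nonneg_vec x \<Longrightarrow> nonneg_vec y \<Longrightarrow> (\<And>j. j \<in> S \<Longrightarrow> x$j = y$j) \<Longrightarrow> h x = h y"
      using depends_on[of x y] by (simp add: h)
    show "j \<in> S \<Longrightarrow> nonneg_vec x \<Longrightarrow> pos_vec y \<Longrightarrow> x \<le> y \<Longrightarrow> x$j < y$j \<Longrightarrow> h x < h y"
      using strict_mono pos_imp_nonneg_vec[of y] by (simp add: h)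
  next
    show "0 < h 1" by (simp add: h one_pos nonneg_vec_one)
    show "continuous_on {x. nonneg_vec x} h"
      using continuous by (rule continuous_on_cong[THEN iffD1, rotated 2]) (auto simp: h)
  next
    fix j assume "j \<in> S"
    then obtain \<kappa> \<theta> where "0 < \<kappa>" "0 < \<theta>" "\<theta> \<le> 1" "power_growth g S j \<kappa> \<theta>"
      using growth by blast
    moreover have "power_growth h S j \<kappa> \<theta>"
      by (rule power_growth_mono[OF \<open>power_growth g S j \<kappa> \<theta>\<close>]) (auto simp: h)
    ultimately show "\<exists>\<kappa> \<theta>. 0 < \<kappa> \<and> 0 < \<theta> \<and> \<theta> \<le> 1 \<and> power_growth h S j \<kappa> \<theta>"
      by blast
  qed
qed

lemma admissible_fun_add:
  fixes g h :: "real^'n \<Rightarrow> real"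
  assumes "admissible_fun g S" "admissible_fun h T"
  shows "admissible_fun (\<lambda>x. g x + h x) (S \<union> T)"
proof -
  interpret g: admissible_fun g S by fact
  interpret h: admissible_fun h T by fact
  show ?thesis
  proof
    fix x y :: "real^'n" and t :: real and j
    show "nonneg_vec x \<Longrightarrow> 0 \<le> g x + h x"
      using g.nonneg h.nonneg by (simp add: add_nonneg_nonneg)
    show "nonneg_vec x \<Longrightarrow> x \<le> y \<Longrightarrow> g x + h x \<le> g y + h y"
      using g.mono h.mono by (simp add: add_mono)
    show "nonneg_vec x \<Longrightarrow> 0 < t \<Longrightarrow> g (t *\<^sub>R x) + h (t *\<^sub>R x) = t * (g x + h x)"
      by (simp add: g.homogeneous h.homogeneous distrib_left)
    show "nonneg_vec x \<Longrightarrow> nonneg_vec y \<Longrightarrow> (\<And>j. j \<in> S \<union> T \<Longrightarrow> x$j = y$j) \<Longrightarrow>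
        g x + h x = g y + h y"
      using g.depends_on[of x y] h.depends_on[of x y] by simp
    assume "j \<in> S \<union> T" "nonneg_vec x" "pos_vec y" "x \<le> y" "x$j < y$j"
    then show "g x + h x < g y + h y"
      using g.strict_mono g.mono h.strict_mono h.mono by (meson Un_iff add_less_le_mono add_le_less_mono)
  next
    show "0 < g 1 + h 1" using g.one_pos h.one_pos by simp
    show "continuous_on {x. nonneg_vec x} (\<lambda>x. g x + h x)"
      using g.continuous h.continuous by (rule continuous_on_add)
  next
    fix j assume "j \<in> S \<union> T"
    then obtain \<kappa> \<theta> where "0 < \<kappa>" "0 < \<theta>" "\<theta> \<le> 1"
      and "power_growth g S j \<kappa> \<theta> \<or> power_growth h T j \<kappa> \<theta>"
      using g.growth h.growth by blast
    moreover have "power_growth (\<lambda>x. g x + h x) (S \<union> T) j \<kappa> \<theta>"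
      if "power_growth g S j \<kappa> \<theta> \<or> power_growth h T j \<kappa> \<theta>"
      using that g.nonneg h.nonneg
      by (auto elim!: power_growth_mono)
    ultimately show "\<exists>\<kappa> \<theta>. 0 < \<kappa> \<and> 0 < \<theta> \<and> \<theta> \<le> 1 \<and> power_growth (\<lambda>x. g x + h x) (S \<union> T) j \<kappa> \<theta>"
      by blast
  qed
qed

lemma admissible_fun_scale:
  fixes g :: "real^'n \<Rightarrow> real"
  assumes "admissible_fun g S" "0 < c"
  shows "admissible_fun (\<lambda>x. c * g x) S"
proof -
  interpret admissible_fun g S by fact
  show ?thesis
  proof
    fix x y :: "real^'n" and t :: real and j
    show "nonneg_vec x \<Longrightarrow> 0 \<le> c * g x"
      using nonneg \<open>0 < c\<close> by simp
    show "nonneg_vec x \<Longrightarrow> x \<le> y \<Longrightarrow> c * g x \<le> c * g y"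
      using mono \<open>0 < c\<close> by simp
    show "nonneg_vec x \<Longrightarrow> 0 < t \<Longrightarrow> c * g (t *\<^sub>R x) = t * (c * g x)"
      by (simp add: homogeneous)
    show "nonneg_vec x \<Longrightarrow> nonneg_vec y \<Longrightarrow> (\<And>j. j \<in> S \<Longrightarrow> x$j = y$j) \<Longrightarrow> c * g x = c * g y"
      using depends_on[of x y] by simp
    show "j \<in> S \<Longrightarrow> nonneg_vec x \<Longrightarrow> pos_vec y \<Longrightarrow> x \<le> y \<Longrightarrow> x$j < y$j \<Longrightarrow> c * g x < c * g y"
      using strict_mono \<open>0 < c\<close> by simp
  next
    show "0 < c * g 1" using one_pos \<open>0 < c\<close> by simp
    show "continuous_on {x. nonneg_vec x} (\<lambda>x. c * g x)"
      using continuous by (intro continuous_on_mult continuous_on_const)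
  next
    fix j assume "j \<in> S"
    then obtain \<kappa> \<theta> where "0 < \<kappa>" "0 < \<theta>" "\<theta> \<le> 1" "power_growth g S j \<kappa> \<theta>"
      using growth by blast
    then show "\<exists>\<kappa> \<theta>. 0 < \<kappa> \<and> 0 < \<theta> \<and> \<theta> \<le> 1 \<and> power_growth (\<lambda>x. c * g x) S j \<kappa> \<theta>"
      using power_growth_scale \<open>0 < c\<close> by (metis mult_pos_pos)
  qed
qed

lemma admissible_fun_sum:
  fixes g :: "'a \<Rightarrow> real^'n \<Rightarrow> real"
  assumes "finite A" "A \<noteq> {}" "\<And>a. a \<in> A \<Longrightarrow> admissible_fun (g a) (S a)"
  shows "admissible_fun (\<lambda>x. \<Sum>a\<in>A. g a x) (\<Union>a\<in>A. S a)"
  using assms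
proof (induction A rule: finite_ne_induct)
  case (insert a A)
  then show ?case
    using admissible_fun_add[of "g a" "S a" "\<lambda>x. \<Sum>a\<in>A. g a x"] by simp
qed simp

lemma prob_vec_nonneg: "prob_vec \<sigma> \<Longrightarrow> 0 \<le> \<sigma>$i"
  by (simp add: prob_vec_def)

lemma prob_vec_le_1: "prob_vec \<sigma> \<Longrightarrow> \<sigma>$j \<le> 1"
  unfolding prob_vec_def using member_le_sum[of j UNIV "\<lambda>i. \<sigma>$i"] by auto

lemma prob_vec_sum_support: "prob_vec \<sigma> \<Longrightarrow> (\<Sum>i | 0 < \<sigma>$i. \<sigma>$i) = 1"
  unfolding prob_vec_def
  by (subst sum.mono_neutral_left[of UNIV]) (auto simp: order.order_iff_strict)

lemma power_growth_power_mean: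
  fixes \<sigma> :: "real^'n"
  assumes r: "0 < r" and \<sigma>: "prob_vec \<sigma>" and "0 < \<sigma>$j"
  shows "power_growth (rmean r \<sigma>) S j (\<sigma>$j powr (1/r)) 1"
  unfolding power_growth_def
proof (intro allI impI)
  fix x :: "real^'n" and m :: real
  assume x: "nonneg_vec x" and "0 < m"
  have "\<sigma>$j * x$j powr r \<le> (\<Sum>i\<in>UNIV. \<sigma>$i * x$i powr r)"
    using prob_vec_nonneg[OF \<sigma>] by (intro member_le_sum mult_nonneg_nonneg) auto
  then have "(\<sigma>$j * x$j powr r) powr (1/r) \<le> rmean r \<sigma> x"
    using r \<open>0 < \<sigma>$j\<close> by (simp add: rmean_def powr_mono2)
  then show "\<sigma>$j powr (1/r) * m powr (1 - 1) * x$j powr 1 \<le> rmean r \<sigma> x"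
    using r x \<open>0 < m\<close> by (simp add: powr_mult powr_powr nonneg_vec_def)
qed

lemma power_growth_geometric_mean:
  fixes \<sigma> :: "real^'n"
  assumes \<sigma>: "prob_vec \<sigma>" and j: "0 < \<sigma>$j"
  shows "power_growth (rmean 0 \<sigma>) {j. 0 < \<sigma>$j} j 1 (\<sigma>$j)"
  unfolding power_growth_def
proof (intro allI impI)
  define S where "S = {j. 0 < \<sigma>$j}"
  fix x :: "real^'n" and m :: real
  assume "nonneg_vec x" "0 < m" and lb: "\<forall>k\<in>{j. 0 < \<sigma>$j}. m \<le> x$k"
  have "(\<Prod>i\<in>S - {j}. m powr \<sigma>$i) = m powr (1 - \<sigma>$j)"
    using \<open>0 < m\<close> j prob_vec_sum_support[OF \<sigma>] by (simp add: S_def powr_sum[symmetric] sum_diff1)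
  moreover have "(\<Prod>i\<in>S - {j}. m powr \<sigma>$i) \<le> (\<Prod>i\<in>S - {j}. x$i powr \<sigma>$i)"
    using lb \<open>0 < m\<close> by (intro prod_mono) (auto simp: S_def intro: powr_mono2)
  then have "x$j powr \<sigma>$j * (\<Prod>i\<in>S - {j}. m powr \<sigma>$i) \<le> (\<Prod>i\<in>S. x$i powr \<sigma>$i)"
    using j by (simp add: S_def prod.remove[of "{j. 0 < \<sigma>$j}" j] mult_left_mono)
  ultimately show "1 * m powr (1 - \<sigma>$j) * x$j powr \<sigma>$j \<le> rmean 0 \<sigma> x"
    by (simp add: rmean_def S_def mult.commute)
qed

lemma admissible_power_mean:
  fixes \<sigma> :: "real^'n"
  assumes r: "0 < r" and \<sigma>: "prob_vec \<sigma>"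
  shows "admissible_fun (rmean r \<sigma>) {j. 0 < \<sigma>$j}"
proof -
  define P where "P x = (\<Sum>i\<in>UNIV. \<sigma>$i * x$i powr r)" for x :: "real^'n"
  have rm: "rmean r \<sigma> x = P x powr (1/r)" for x
    using r by (simp add: rmean_def P_def)
  have \<sigma>0: "0 \<le> \<sigma>$i" for i using prob_vec_nonneg[OF \<sigma>] .
  have P0: "0 \<le> P x" for x
    unfolding P_def by (intro sum_nonneg mult_nonneg_nonneg \<sigma>0 powr_ge_zero)
  have P_mono: "P x \<le> P y" if "nonneg_vec x" "x \<le> y" for x y
    unfolding P_def using that r \<sigma>0
    by (intro sum_mono mult_left_mono powr_mono2) (auto simp: nonneg_vec_def less_eq_vec_def)
  show ?thesis
  proof
    fix x y :: "real^'n" and t :: real and j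
    show "0 \<le> rmean r \<sigma> x" by (simp add: rm)
    show "nonneg_vec x \<Longrightarrow> x \<le> y \<Longrightarrow> rmean r \<sigma> x \<le> rmean r \<sigma> y"
      using P_mono P0 r by (simp add: rm powr_mono2)
    show "rmean r \<sigma> (t *\<^sub>R x) = t * rmean r \<sigma> x" if "nonneg_vec x" "0 < t"
    proof -
      have "P (t *\<^sub>R x) = t powr r * P x"
        by (simp add: P_def powr_mult sum_distrib_left algebra_simps)
      then show ?thesis
        using r that by (simp add: rm powr_mult powr_powr)
    qed
    show "rmean r \<sigma> x = rmean r \<sigma> y" if "\<And>j. j \<in> {j. 0 < \<sigma>$j} \<Longrightarrow> x$j = y$j"
    proof -
      have "\<sigma>$i * x$i powr r = \<sigma>$i * y$i powr r" for i
        using that[of i] \<sigma>0[of i] by (cases "0 < \<sigma>$i") auto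
      then have "P x = P y" unfolding P_def by (intro sum.cong) auto
      then show ?thesis by (simp add: rm)
    qed
    show "rmean r \<sigma> x < rmean r \<sigma> y"
      if j: "j \<in> {j. 0 < \<sigma>$j}" and "nonneg_vec x" "pos_vec y" "x \<le> y" "x$j < y$j"
    proof -
      have "P x < P y"
        unfolding P_def using that r \<sigma>0
        by (intro sum_strict_mono_ex1 ballI bexI[of _ j] mult_left_mono powr_mono2
            mult_strict_left_mono powr_less_mono2)
          (auto simp: nonneg_vec_def less_eq_vec_def)
      then show ?thesis using P0 r by (simp add: rm powr_less_mono2)
    qed
  next
    show "0 < rmean r \<sigma> 1"
      using \<sigma> by (simp add: rm P_def prob_vec_def)
    have "continuous_on {x. nonneg_vec x} (\<lambda>x::real^'n. x$i powr r)" for i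
      using r by (intro continuous_on_powr' continuous_on_component continuous_on_id
          continuous_on_const) (auto simp: nonneg_vec_def)
    then have "continuous_on {x. nonneg_vec x} P"
      unfolding P_def by (intro continuous_on_sum continuous_on_mult continuous_on_const) auto
    then show "continuous_on {x. nonneg_vec x} (rmean r \<sigma>)"
      unfolding rm[abs_def] using r P0 by (intro continuous_on_powr' continuous_on_const) auto
  next
    fix j assume "j \<in> {j. 0 < \<sigma>$j}"
    then show "\<exists>\<kappa> \<theta>. 0 < \<kappa> \<and> 0 < \<theta> \<and> \<theta> \<le> 1 \<and> power_growth (rmean r \<sigma>) {j. 0 < \<sigma>$j} j \<kappa> \<theta>"
      using power_growth_power_mean[OF r \<sigma>]
      by (intro exI[of _ "\<sigma>$j powr (1/r)"] exI[of _ 1]) simp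
  qed
qed

lemma admissible_geometric_mean:
  fixes \<sigma> :: "real^'n"
  assumes \<sigma>: "prob_vec \<sigma>"
  shows "admissible_fun (rmean 0 \<sigma>) {j. 0 < \<sigma>$j}"
proof -
  define S where "S = {j. 0 < \<sigma>$j}"
  have rm: "rmean 0 \<sigma> x = (\<Prod>i\<in>S. x$i powr \<sigma>$i)" for x
    by (simp add: rmean_def S_def)
  have \<sigma>S: "(\<Sum>i\<in>S. \<sigma>$i) = 1"
    using prob_vec_sum_support[OF \<sigma>] by (simp add: S_def)
  show "admissible_fun (rmean 0 \<sigma>) S"
  proof
    fix x y :: "real^'n" and t :: real and j
    show "0 \<le> rmean 0 \<sigma> x" by (simp add: rm prod_nonneg)
    show "nonneg_vec x \<Longrightarrow> x \<le> y \<Longrightarrow> rmean 0 \<sigma> x \<le> rmean 0 \<sigma> y"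
      by (auto simp: rm S_def nonneg_vec_def less_eq_vec_def intro!: prod_mono powr_mono2)
    show "rmean 0 \<sigma> (t *\<^sub>R x) = t * rmean 0 \<sigma> x" if "0 < t"
    proof -
      have "rmean 0 \<sigma> (t *\<^sub>R x) = (\<Prod>i\<in>S. t powr \<sigma>$i) * rmean 0 \<sigma> x"
        by (simp add: rm powr_mult prod.distrib)
      also have "(\<Prod>i\<in>S. t powr \<sigma>$i) = t"
        using that \<sigma>S by (simp add: powr_sum[symmetric])
      finally show ?thesis .
    qed
    show "(\<And>j. j \<in> S \<Longrightarrow> x$j = y$j) \<Longrightarrow> rmean 0 \<sigma> x = rmean 0 \<sigma> y"
      by (simp add: rm)
    show "rmean 0 \<sigma> x < rmean 0 \<sigma> y"
      if "j \<in> S" "nonneg_vec x" "pos_vec y" "x \<le> y" "x$j < y$j"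
    proof -
      have "y$i \<noteq> 0" for i using \<open>pos_vec y\<close> by (metis pos_vec_def less_irrefl)
      then show ?thesis
        unfolding rm using that
        by (intro prod_mono_strict[of j] conjI powr_mono2 powr_less_mono2)
          (auto simp: S_def nonneg_vec_def less_eq_vec_def)
    qed
  next
    show "0 < rmean 0 \<sigma> 1" by (simp add: rm)
    show "continuous_on {x. nonneg_vec x} (rmean 0 \<sigma>)"
      unfolding rm[abs_def]
      by (intro continuous_on_prod continuous_on_powr' continuous_on_component continuous_on_id
          continuous_on_const) (auto simp: S_def nonneg_vec_def)
  next
    fix j assume "j \<in> S"
    then show "\<exists>\<kappa> \<theta>. 0 < \<kappa> \<and> 0 < \<theta> \<and> \<theta> \<le> 1 \<and> power_growth (rmean 0 \<sigma>) S j \<kappa> \<theta>"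
      using power_growth_geometric_mean[OF \<sigma>] prob_vec_le_1[OF \<sigma>]
      by (intro exI[of _ 1] exI[of _ "\<sigma>$j"]) (simp add: S_def)
  qed
qed

lemma admissible_rmean:
  "0 \<le> r \<Longrightarrow> prob_vec \<sigma> \<Longrightarrow> admissible_fun (rmean r \<sigma>) {j. 0 < \<sigma>$j}"
  using admissible_power_mean admissible_geometric_mean by (cases "r = 0") auto

section \<open>Admissible maps\<close>

locale admissible_map =
  fixes f :: "real^'n \<Rightarrow> real^'n" and D :: "'n \<Rightarrow> 'n set"
  assumes admissible_coord: "admissible_fun (\<lambda>x. f x $ i) (D i)"
begin

lemma nonneg: "nonneg_vec x \<Longrightarrow> nonneg_vec (f x)"
  using admissible_fun.nonneg[OF admissible_coord] by (simp add: nonneg_vec_def)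

lemma mono: "nonneg_vec x \<Longrightarrow> x \<le> y \<Longrightarrow> f x \<le> f y"
  using admissible_fun.mono[OF admissible_coord] by (simp add: less_eq_vec_def)

lemma homogeneous: "nonneg_vec x \<Longrightarrow> 0 < t \<Longrightarrow> f (t *\<^sub>R x) = t *\<^sub>R f x"
  using admissible_fun.homogeneous[OF admissible_coord] by (simp add: vec_eq_iff)

lemma continuous: "continuous_on {x. nonneg_vec x} f"
proof -
  have "continuous_on {x. nonneg_vec x} (\<lambda>x. \<chi> i. f x $ i)"
    using admissible_fun.continuous[OF admissible_coord] by (rule continuous_on_vec_lambda)
  then show ?thesis by simp
qed

lemma depends_on:
  "nonneg_vec x \<Longrightarrow> nonneg_vec y \<Longrightarrow> (\<And>j. j \<in> D i \<Longrightarrow> x$j = y$j) \<Longrightarrow> f x $ i = f y $ i"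
  by (rule admissible_fun.depends_on[OF admissible_coord])

lemma strict_mono:
  "j \<in> D i \<Longrightarrow> nonneg_vec x \<Longrightarrow> pos_vec y \<Longrightarrow> x \<le> y \<Longrightarrow> x$j < y$j \<Longrightarrow> f x $ i < f y $ i"
  by (rule admissible_fun.strict_mono[OF admissible_coord])

lemma growth:
  "j \<in> D i \<Longrightarrow> \<exists>\<kappa> \<theta>. 0 < \<kappa> \<and> 0 < \<theta> \<and> \<theta> \<le> 1 \<and> power_growth (\<lambda>x. f x $ i) (D i) j \<kappa> \<theta>"
  by (rule admissible_fun.growth[OF admissible_coord])

lemma lower_bound:
  assumes x: "nonneg_vec x" and "0 \<le> m" and lb: "\<And>k. k \<in> D i \<Longrightarrow> m \<le> x$k"
  shows "m * f 1 $ i \<le> f x $ i"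
proof (cases "m = 0")
  case True
  then show ?thesis using nonneg[OF x] by (simp add: nonneg_vec_def)
next
  case False
  define x' where "x' = (\<chi> k. if k \<in> D i then x$k else m)"
  have x': "nonneg_vec x'" using x \<open>0 \<le> m\<close> by (simp add: x'_def nonneg_vec_def)
  have "m * f 1 $ i = f (m *\<^sub>R 1) $ i"
    using homogeneous[OF nonneg_vec_one, of m] False \<open>0 \<le> m\<close> by simp
  also have "\<dots> \<le> f x' $ i"
    using mono[of "m *\<^sub>R 1" x'] \<open>0 \<le> m\<close> lb
    by (simp add: nonneg_vec_scaleR nonneg_vec_one less_eq_vec_def x'_def)
  also have "\<dots> = f x $ i"
    by (rule depends_on[OF x' x]) (simp add: x'_def)
  finally show ?thesis .
qed

lemma pos: "pos_vec x \<Longrightarrow> pos_vec (f x)"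
proof -
  assume "pos_vec x"
  then obtain m where "0 < m" "\<And>k. m \<le> x$k" using pos_vec_min_bound by blast
  then have "0 < m * f 1 $ i" "m * f 1 $ i \<le> f x $ i" for i
    using admissible_fun.one_pos[OF admissible_coord] lower_bound \<open>pos_vec x\<close>
    by (auto simp: pos_imp_nonneg_vec)
  then show "pos_vec (f x)" unfolding pos_vec_def by (meson order_less_le_trans)
qed

lemma depends_on_closed:
  assumes "\<And>i. i \<in> A \<Longrightarrow> D i \<subseteq> A" "i \<in> A" "nonneg_vec x" "nonneg_vec y" "\<And>j. j \<in> A \<Longrightarrow> x$j = y$j"
  shows "f x $ i = f y $ i"
  using assms by (intro depends_on) auto

lemma uniform_growth:
  "\<exists>\<kappa> \<theta>. 0 < \<kappa> \<and> 0 < \<theta> \<and> \<theta> \<le> 1 \<and>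
    (\<forall>i. \<forall>j\<in>D i. power_growth (\<lambda>x. f x $ i) (D i) j \<kappa> \<theta>)"
proof -
  have "\<forall>\<^sub>F \<epsilon> in at_right 0. power_growth (\<lambda>x. f x $ i) (D i) j \<epsilon> \<epsilon>" if j: "j \<in> D i" for i j
  proof -
    obtain \<kappa> \<theta> where "0 < \<kappa>" "0 < \<theta>" and G: "power_growth (\<lambda>x. f x $ i) (D i) j \<kappa> \<theta>"
      using growth[OF j] by blast
    then have "0 < min \<kappa> \<theta>" by simp
    then show ?thesis
      by (rule eventually_at_right_0_small[THEN eventually_mono])
        (auto intro: power_growth_weaken[OF G j])
  qed
  then have "\<forall>\<^sub>F \<epsilon> in at_right 0. (0 < \<epsilon> \<and> \<epsilon> \<le> 1) \<and>
      (\<forall>i. \<forall>j\<in>D i. power_growth (\<lambda>x. f x $ i) (D i) j \<epsilon> \<epsilon>)"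
    by (intro eventually_conj eventually_at_right_0_small eventually_all_finite eventually_ball_finite
        ballI) auto
  then show ?thesis
    using eventually_happens'[OF trivial_limit_at_right_real] by blast
qed

end

lemma admissible_map_add:
  assumes "admissible_map f D" "admissible_map g E"
  shows "admissible_map (\<lambda>x. f x + g x) (\<lambda>i. D i \<union> E i)"
proof -
  have "admissible_fun (\<lambda>x. f x $ i + g x $ i) (D i \<union> E i)" for i
    using assms by (intro admissible_fun_add) (simp_all add: admissible_map_def)
  then show ?thesis by (simp add: admissible_map_def)
qed

lemma powr_comp_bound_identity:
  fixes m c \<kappa>' x :: real
  assumes "0 < m" "0 < c" "0 < \<kappa>'" "0 \<le> x"
  shows "\<kappa> * (m * c) powr (1 - \<theta>) * (\<kappa>' * m powr (1 - \<theta>') * x powr \<theta>') powr \<theta> =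
    \<kappa> * c powr (1 - \<theta>) * \<kappa>' powr \<theta> * m powr (1 - \<theta> * \<theta>') * x powr (\<theta> * \<theta>')"
proof -
  have "m powr (1 - \<theta>) * (m powr (1 - \<theta>')) powr \<theta> = m powr (1 - \<theta> * \<theta>')"
    by (simp add: powr_powr powr_add[symmetric] algebra_simps)
  moreover have "(x powr \<theta>') powr \<theta> = x powr (\<theta> * \<theta>')"
    by (simp add: powr_powr mult.commute)
  ultimately show ?thesis
    by (simp add: powr_mult algebra_simps)
qed

lemma power_growth_comp:
  fixes f g :: "real^'n \<Rightarrow> real^'n"
  assumes "admissible_map g E" "l \<in> D" "0 < c" "\<And>k. c \<le> g 1 $ k"
    and F: "power_growth (\<lambda>x. f x $ i) D l \<kappa> \<theta>" and G: "power_growth (\<lambda>x. g x $ l) (E l) j \<kappa>' \<theta>'"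
    and "0 < \<kappa>" "0 < \<kappa>'" "0 < \<theta>"
  shows "power_growth (\<lambda>x. (f \<circ> g) x $ i) (\<Union>l\<in>D. E l) j (\<kappa> * c powr (1 - \<theta>) * \<kappa>' powr \<theta>) (\<theta> * \<theta>')"
  unfolding power_growth_def
proof (intro allI impI)
  interpret g: admissible_map g E by fact
  fix x :: "real^'n" and m :: real
  assume x: "nonneg_vec x" and "0 < m" and lb: "\<forall>k\<in>\<Union>l\<in>D. E l. m \<le> x$k"
  have g_lower: "m * c \<le> g x $ l'" if "l' \<in> D" for l'
  proof -
    have "m * c \<le> m * g 1 $ l'" using assms(4)[of l'] \<open>0 < m\<close> by simp
    also have "\<dots> \<le> g x $ l'" using g.lower_bound[OF x] lb that \<open>0 < m\<close> by auto
    finally show ?thesis .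
  qed
  have "\<kappa>' * m powr (1 - \<theta>') * x$j powr \<theta>' \<le> g x $ l"
    using power_growthD[OF G x \<open>0 < m\<close>] lb \<open>l \<in> D\<close> by blast
  then have "\<kappa> * (m * c) powr (1 - \<theta>) * (\<kappa>' * m powr (1 - \<theta>') * x$j powr \<theta>') powr \<theta>
      \<le> \<kappa> * (m * c) powr (1 - \<theta>) * (g x $ l) powr \<theta>"
    using assms(7-9) \<open>0 < m\<close> by (intro mult_left_mono powr_mono2) auto
  also have "\<dots> \<le> f (g x) $ i"
    using power_growthD[OF F g.nonneg[OF x]] g_lower \<open>0 < m\<close> \<open>0 < c\<close> by auto
  finally show "\<kappa> * c powr (1 - \<theta>) * \<kappa>' powr \<theta> * m powr (1 - \<theta> * \<theta>') * x$j powr (\<theta> * \<theta>')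
      \<le> (f \<circ> g) x $ i"
    using x \<open>0 < m\<close> \<open>0 < c\<close> \<open>0 < \<kappa>'\<close> by (simp add: powr_comp_bound_identity nonneg_vec_def)
qed

lemma admissible_map_comp:
  fixes f g :: "real^'n \<Rightarrow> real^'n"
  assumes "admissible_map f D" "admissible_map g E"
  shows "admissible_map (f \<circ> g) (\<lambda>i. \<Union>l\<in>D i. E l)"
proof -
  interpret f: admissible_map f D by fact
  interpret g: admissible_map g E by fact
  obtain c where "0 < c" and c: "\<And>k. c \<le> g 1 $ k"
    using pos_vec_min_bound[OF g.pos[OF pos_vec_one]] by blast
  show ?thesis
  proof (rule admissible_map.intro)
    fix i
    show "admissible_fun (\<lambda>x. (f \<circ> g) x $ i) (\<Union>l\<in>D i. E l)"
    proof
      fix x y :: "real^'n" and t :: real and j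
      show "nonneg_vec x \<Longrightarrow> 0 \<le> (f \<circ> g) x $ i"
        using f.nonneg g.nonneg by (simp add: nonneg_vec_def)
      show "nonneg_vec x \<Longrightarrow> x \<le> y \<Longrightarrow> (f \<circ> g) x $ i \<le> (f \<circ> g) y $ i"
        using f.mono g.mono g.nonneg by (simp add: less_eq_vec_def)
      show "nonneg_vec x \<Longrightarrow> 0 < t \<Longrightarrow> (f \<circ> g) (t *\<^sub>R x) $ i = t * (f \<circ> g) x $ i"
        using f.homogeneous g.homogeneous g.nonneg by simp
      show "(f \<circ> g) x $ i = (f \<circ> g) y $ i"
        if "nonneg_vec x" "nonneg_vec y" "\<And>j. j \<in> (\<Union>l\<in>D i. E l) \<Longrightarrow> x$j = y$j"
      proof -
        have "g x $ l = g y $ l" if "l \<in> D i" for l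
          using g.depends_on[OF \<open>nonneg_vec x\<close> \<open>nonneg_vec y\<close>, of l] that
            \<open>\<And>j. j \<in> (\<Union>l\<in>D i. E l) \<Longrightarrow> x$j = y$j\<close> by blast
        then show ?thesis
          using f.depends_on[OF g.nonneg[OF \<open>nonneg_vec x\<close>] g.nonneg[OF \<open>nonneg_vec y\<close>]] by simp
      qed
      assume j: "j \<in> (\<Union>l\<in>D i. E l)" and x: "nonneg_vec x" "pos_vec y" "x \<le> y" "x$j < y$j"
      then obtain l where l: "l \<in> D i" "j \<in> E l" by blast
      show "(f \<circ> g) x $ i < (f \<circ> g) y $ i"
        using f.strict_mono[OF l(1) g.nonneg g.pos] g.strict_mono[OF l(2)] g.mono x by simp
    next
      show "0 < (f \<circ> g) 1 $ i"
        using f.pos[OF g.pos[OF pos_vec_one]] by (simp add: pos_vec_def)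
      have "continuous_on {x. nonneg_vec x} (f \<circ> g)"
        using f.continuous g.continuous g.nonneg by (auto intro: continuous_on_compose2)
      then show "continuous_on {x. nonneg_vec x} (\<lambda>x. (f \<circ> g) x $ i)"
        by (rule continuous_on_component)
    next
      fix j assume "j \<in> (\<Union>l\<in>D i. E l)"
      then obtain l where l: "l \<in> D i" "j \<in> E l" by blast
      obtain \<kappa> \<theta> where "0 < \<kappa>" "0 < \<theta>" "\<theta> \<le> 1" and F: "power_growth (\<lambda>x. f x $ i) (D i) l \<kappa> \<theta>"
        using f.growth[OF l(1)] by blast
      obtain \<kappa>' \<theta>' where "0 < \<kappa>'" "0 < \<theta>'" "\<theta>' \<le> 1" and G: "power_growth (\<lambda>x. g x $ l) (E l) j \<kappa>' \<theta>'"
        using g.growth[OF l(2)] by blast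
      have "power_growth (\<lambda>x. (f \<circ> g) x $ i) (\<Union>l\<in>D i. E l) j
          (\<kappa> * c powr (1 - \<theta>) * \<kappa>' powr \<theta>) (\<theta> * \<theta>')"
        using assms(2) l(1) \<open>0 < c\<close> c F G \<open>0 < \<kappa>\<close> \<open>0 < \<kappa>'\<close> \<open>0 < \<theta>\<close> by (rule power_growth_comp)
      moreover have "0 < \<kappa> * c powr (1 - \<theta>) * \<kappa>' powr \<theta>" "0 < \<theta> * \<theta>'" "\<theta> * \<theta>' \<le> 1"
        using \<open>0 < \<kappa>\<close> \<open>0 < \<kappa>'\<close> \<open>0 < \<theta>\<close> \<open>0 < \<theta>'\<close> \<open>\<theta> \<le> 1\<close> \<open>\<theta>' \<le> 1\<close> \<open>0 < c\<close>
        by (auto simp: mult_le_one)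
      ultimately show "\<exists>\<kappa> \<theta>. 0 < \<kappa> \<and> 0 < \<theta> \<and> \<theta> \<le> 1 \<and>
          power_growth (\<lambda>x. (f \<circ> g) x $ i) (\<Union>l\<in>D i. E l) j \<kappa> \<theta>"
        by blast
    qed
  qed
qed

lemma admissible_map_Mplus:
  fixes f :: "real^'n \<Rightarrow> real^'n"
  assumes "f \<in> Mplus"
  shows "\<exists>D. admissible_map f D"
proof -
  have "\<exists>S. admissible_fun (\<lambda>x. f x $ i) S" for i
  proof -
    obtain K c r \<sigma> where "(0::nat) < K" and K: "\<forall>k<K. 0 < c k \<and> 0 \<le> r k \<and> prob_vec (\<sigma> k)"
      and f: "\<forall>x. nonneg_vec x \<longrightarrow> f x $ i = (\<Sum>k<K. c k * rmean (r k) (\<sigma> k) x)"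
      using assms unfolding Mplus_def by blast
    have "admissible_fun (\<lambda>x. \<Sum>k<K. c k * rmean (r k) (\<sigma> k) x) (\<Union>k<K. {j. 0 < \<sigma> k $ j})"
      using \<open>0 < K\<close> K by (intro admissible_fun_sum admissible_fun_scale admissible_rmean) auto
    then have "admissible_fun (\<lambda>x. f x $ i) (\<Union>k<K. {j. 0 < \<sigma> k $ j})"
      by (rule admissible_fun_cong) (simp add: f)
    then show ?thesis by blast
  qed
  then show ?thesis unfolding admissible_map_def by metis
qed

lemma admissible_map_Mplus_cl:
  fixes f :: "real^'n \<Rightarrow> real^'n"
  assumes "f \<in> Mplus_cl"
  shows "\<exists>D. admissible_map f D"
  using assms
proof (induction rule: Mplus_cl.induct)
  case (base f)
  then show ?case by (rule admissible_map_Mplus)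
next
  case (add f g)
  then show ?case using admissible_map_add by blast
next
  case (comp f g)
  then show ?case using admissible_map_comp by blast
qed

section \<open>The dependency graph\<close>

lemma (in admissible_map) arc_iff: "arc f i j \<longleftrightarrow> j \<in> D i"
proof
  assume "arc f i j"
  show "j \<in> D i"
  proof (rule ccontr)
    assume "j \<notin> D i"
    then have "f (exp_unit t j) $ i = f 1 $ i" for t
      by (intro depends_on) (auto simp: exp_unit_def nonneg_vec_def)
    moreover have "\<forall>\<^sub>F t in at_top. f 1 $ i + 1 \<le> f (exp_unit t j) $ i"
      using \<open>arc f i j\<close> unfolding arc_def filterlim_at_top by blast
    ultimately show False by simp
  qed
next
  assume "j \<in> D i"
  then obtain \<kappa> \<theta> where "0 < \<kappa>" "0 < \<theta>" and G: "power_growth (\<lambda>x. f x $ i) (D i) j \<kappa> \<theta>"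
    using growth by blast
  have "\<kappa> * \<theta> * t \<le> f (exp_unit t j) $ i" if "0 \<le> t" for t
  proof -
    have "t * \<theta> \<le> exp (t * \<theta>)"
      using exp_ge_add_one_self[of "t * \<theta>"] by linarith
    then have "\<kappa> * (t * \<theta>) \<le> \<kappa> * exp (t * \<theta>)"
      using \<open>0 < \<kappa>\<close> by simp
    also have "\<dots> = \<kappa> * 1 powr (1 - \<theta>) * exp_unit t j $ j powr \<theta>"
      by (simp add: exp_unit_def powr_def)
    also have "\<dots> \<le> f (exp_unit t j) $ i"
      using that by (intro power_growthD[OF G]) (auto simp: exp_unit_def nonneg_vec_def)
    finally show ?thesis by (simp add: algebra_simps)
  qed
  moreover have "filterlim (\<lambda>t. \<kappa> * \<theta> * t) at_top at_top"
    using \<open>0 < \<kappa>\<close> \<open>0 < \<theta>\<close> by (intro filterlim_tendsto_pos_mult_at_top[OF tendsto_const])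
      (auto simp: filterlim_ident)
  ultimately show "arc f i j"
    unfolding arc_def
    by (elim filterlim_at_top_mono) (auto simp: eventually_at_top_linorder)
qed

lemma reach_refl: "reach f i i"
  by (simp add: reach_def)

lemma reach_trans: "reach f i j \<Longrightarrow> reach f j k \<Longrightarrow> reach f i k"
  unfolding reach_def by auto

lemma reach_arc_trans: "reach f i j \<Longrightarrow> arc f j k \<Longrightarrow> reach f i k"
  unfolding reach_def by (auto intro: rtrancl_into_rtrancl)

lemma reach_exit_arc:
  assumes "reach f a b" "a \<in> A" "b \<notin> A"
  obtains c d where "c \<in> A" "d \<notin> A" "arc f c d"
proof -
  have "(a, b) \<in> {(a, b). arc f a b}\<^sup>*" using assms(1) by (simp add: reach_def)
  then have "\<exists>c\<in>A. \<exists>d. d \<notin> A \<and> arc f c d"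
    using assms(3)
  proof (induction rule: rtrancl_induct)
    case (step y z)
    then show ?case by (cases "y \<in> A") auto
  qed (use assms(2) in simp)
  then show ?thesis using that by blast
qed

definition arc_closed :: "(real^'n \<Rightarrow> real^'n) \<Rightarrow> 'n set \<Rightarrow> bool" where
  "arc_closed f S \<longleftrightarrow> (\<forall>i j. i \<in> S \<longrightarrow> arc f i j \<longrightarrow> j \<in> S)"

lemma arc_closed_reach: "arc_closed f S \<Longrightarrow> i \<in> S \<Longrightarrow> reach f i j \<Longrightarrow> j \<in> S"
  unfolding arc_closed_def by (metis reach_exit_arc)

lemma (in admissible_map) arc_closed_iff: "arc_closed f S \<longleftrightarrow> (\<forall>i\<in>S. D i \<subseteq> S)"
  by (auto simp: arc_closed_def arc_iff)

lemma scc_eq: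
  assumes "scc f C" "j \<in> C"
  shows "C = {k. reach f j k \<and> reach f k j}"
proof -
  obtain i where C: "C = {k. reach f i k \<and> reach f k i}" using assms(1) by (auto simp: scc_def)
  show ?thesis unfolding C using assms(2) C reach_trans by blast
qed

lemma scc_reach: "scc f C \<Longrightarrow> i \<in> C \<Longrightarrow> j \<in> C \<Longrightarrow> reach f i j"
  using scc_eq by blast

lemma scc_disjoint: "scc f C \<Longrightarrow> scc f C' \<Longrightarrow> C \<noteq> C' \<Longrightarrow> C \<inter> C' = {}"
  using scc_eq by blast

lemma scc_nonempty: "scc f C \<Longrightarrow> C \<noteq> {}"
  unfolding scc_def using reach_refl by blast

lemma final_class_nonempty: "final_class f C \<Longrightarrow> C \<noteq> {}"
  unfolding final_class_def using scc_nonempty by blast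

lemma final_class_closed: "final_class f C \<Longrightarrow> arc_closed f C"
  unfolding final_class_def arc_closed_def by blast

text \<open>Take i in A with the fewest vertices of A reachable from it: every arc from the class of i
  that lands in A leads back to i.\<close>

lemma exists_sink_vertex:
  fixes f :: "real^'n \<Rightarrow> real^'n"
  assumes "A \<noteq> {}"
  obtains i where "i \<in> A" "\<And>c d. reach f i c \<Longrightarrow> arc f c d \<Longrightarrow> d \<in> A \<Longrightarrow> reach f d i"
proof -
  define R where "R i = {j\<in>A. reach f i j}" for i
  obtain i where i: "i \<in> A" "\<And>i'. i' \<in> A \<Longrightarrow> card (R i) \<le> card (R i')"
    using finite_arg_minE[OF finite assms, of "\<lambda>i. card (R i)"] by blast
  show thesis
  proof (rule that[OF i(1)])
    fix c d assume "reach f i c" "arc f c d" "d \<in> A"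
    then have "R d \<subseteq> R i" unfolding R_def using reach_arc_trans reach_trans by blast
    moreover have "card (R i) \<le> card (R d)" using i(2) \<open>d \<in> A\<close> .
    ultimately have "R d = R i" by (metis card_subset_eq card_mono finite le_antisym)
    then show "reach f d i" using i(1) reach_refl unfolding R_def by blast
  qed
qed

lemma closed_contains_final_class:
  fixes f :: "real^'n \<Rightarrow> real^'n"
  assumes "arc_closed f E" "E \<noteq> {}"
  obtains C where "final_class f C" "C \<subseteq> E"
proof -
  obtain i where "i \<in> E" and sink: "\<And>c d. reach f i c \<Longrightarrow> arc f c d \<Longrightarrow> d \<in> E \<Longrightarrow> reach f d i"
    using exists_sink_vertex[OF assms(2)] by blast
  define C where "C = {j. reach f i j \<and> reach f j i}"
  have "C \<subseteq> E" unfolding C_def using arc_closed_reach[OF assms(1) \<open>i \<in> E\<close>] by blast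
  moreover have "final_class f C"
    unfolding final_class_def
  proof
    show "scc f C" unfolding scc_def C_def by blast
    show "\<forall>c d. c \<in> C \<and> arc f c d \<longrightarrow> d \<in> C"
      using sink \<open>C \<subseteq> E\<close> assms(1) reach_arc_trans unfolding arc_closed_def C_def by blast
  qed
  ultimately show thesis using that by blast
qed

lemma exists_final_class:
  fixes f :: "real^'n \<Rightarrow> real^'n"
  obtains C where "final_class f C"
  using closed_contains_final_class[of f UNIV] by (auto simp: arc_closed_def)

lemma exists_next_class:
  fixes f :: "real^'n \<Rightarrow> real^'n"
  assumes "arc_closed f S" "S \<noteq> UNIV"
  obtains C where "scc f C" "C \<inter> S = {}" "arc_closed f (S \<union> C)"
proof -
  obtain i where "i \<notin> S" and sink: "\<And>c d. reach f i c \<Longrightarrow> arc f c d \<Longrightarrow> d \<notin> S \<Longrightarrow> reach f d i"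
    using exists_sink_vertex[of "- S"] assms(2) by auto
  define C where "C = {j. reach f i j \<and> reach f j i}"
  have "scc f C" unfolding scc_def C_def by blast
  moreover have "C \<inter> S = {}"
    using arc_closed_reach[OF assms(1)] \<open>i \<notin> S\<close> unfolding C_def by blast
  moreover have "arc_closed f (S \<union> C)"
    using assms(1) sink reach_arc_trans unfolding arc_closed_def C_def by blast
  ultimately show thesis using that by blast
qed

lemma scc_exit_arc:
  assumes C: "scc f C" and "T \<subset> C" and "T \<noteq> {} \<or> \<not> final_class f C"
  shows "\<exists>k\<in>C - T. \<exists>j. arc f k j \<and> (j \<in> T \<or> j \<notin> C)"
proof -
  obtain i where "i \<in> C" "i \<notin> T" using \<open>T \<subset> C\<close> by blast
  obtain b where "reach f i b" "b \<notin> C - T"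
  proof (cases "T = {}")
    case False
    then obtain b where "b \<in> T" by blast
    then show thesis using that scc_reach[OF C \<open>i \<in> C\<close>] \<open>T \<subset> C\<close> by blast
  next
    case True
    then obtain c d where "c \<in> C" "arc f c d" "d \<notin> C"
      using assms(3) C unfolding final_class_def by blast
    then show thesis
      using that[of d] scc_reach[OF C \<open>i \<in> C\<close> \<open>c \<in> C\<close>] reach_arc_trans by blast
  qed
  then obtain c d where "c \<in> C - T" "d \<notin> C - T" "arc f c d"
    using reach_exit_arc[of f i b "C - T"] \<open>i \<in> C\<close> \<open>i \<notin> T\<close> by blast
  then show ?thesis by blast
qed

section \<open>Cone spectral radius\<close>

lemma cone_r_le_max_ratio:
  fixes g :: "real^'n \<Rightarrow> real^'n"
  assumes "\<And>y. pos_vec y \<Longrightarrow> nonneg_vec (g y)" "pos_vec x"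
  shows "cone_r g \<le> Max (range (\<lambda>i. g x $ i / x $ i))"
  unfolding cone_r_def
proof (rule cInf_lower)
  show "bdd_below ((\<lambda>x. Max (range (\<lambda>i. g x $ i / x $ i))) ` {x. pos_vec x})"
  proof (rule bdd_belowI)
    fix r assume "r \<in> (\<lambda>x. Max (range (\<lambda>i. g x $ i / x $ i))) ` {x. pos_vec x}"
    then obtain y where y: "pos_vec y" "r = Max (range (\<lambda>i. g y $ i / y $ i))" by blast
    obtain i :: 'n where True by simp
    have "0 \<le> g y $ i / y $ i"
      using assms(1)[OF y(1)] y(1) by (simp add: nonneg_vec_def pos_vec_def less_imp_le)
    also have "\<dots> \<le> r" unfolding y(2) by (rule Max_ge) auto
    finally show "0 \<le> r" .
  qed
qed (use assms(2) in blast)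

lemma cone_r_le:
  fixes g :: "real^'n \<Rightarrow> real^'n"
  assumes "\<And>y. pos_vec y \<Longrightarrow> nonneg_vec (g y)" "pos_vec x" "\<And>i. g x $ i \<le> c * x$i"
  shows "cone_r g \<le> c"
proof -
  have "Max (range (\<lambda>i. g x $ i / x $ i)) \<le> c"
    using assms(2,3) by (auto simp: pos_vec_def divide_le_eq)
  moreover have "cone_r g \<le> Max (range (\<lambda>i. g x $ i / x $ i))"
    using assms(1,2) by (rule cone_r_le_max_ratio)
  ultimately show ?thesis by linarith
qed

lemma cone_r_less:
  fixes g :: "real^'n \<Rightarrow> real^'n"
  assumes "\<And>y. pos_vec y \<Longrightarrow> nonneg_vec (g y)" "pos_vec x" "\<And>i. g x $ i < c * x$i"
  shows "cone_r g < c"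
proof -
  have "Max (range (\<lambda>i. g x $ i / x $ i)) < c"
    using assms(2,3) by (auto simp: pos_vec_def divide_less_eq)
  moreover have "cone_r g \<le> Max (range (\<lambda>i. g x $ i / x $ i))"
    using assms(1,2) by (rule cone_r_le_max_ratio)
  ultimately show ?thesis by linarith
qed

lemma cone_r_ge:
  fixes g :: "real^'n \<Rightarrow> real^'n"
  assumes "\<And>y. pos_vec y \<Longrightarrow> \<exists>i. c * y$i \<le> g y $ i"
  shows "c \<le> cone_r g"
  unfolding cone_r_def
proof (rule cInf_greatest)
  show "(\<lambda>x. Max (range (\<lambda>i. g x $ i / x $ i))) ` {x. pos_vec x} \<noteq> {}"
    using pos_vec_one by blast
  fix r assume "r \<in> (\<lambda>x. Max (range (\<lambda>i. g x $ i / x $ i))) ` {x. pos_vec x}"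
  then obtain y where y: "pos_vec y" "r = Max (range (\<lambda>i. g y $ i / y $ i))" by blast
  obtain i where "c * y$i \<le> g y $ i" using assms[OF y(1)] by blast
  then have "c \<le> g y $ i / y $ i" using y(1) by (simp add: pos_vec_def le_divide_eq)
  also have "\<dots> \<le> r" unfolding y(2) by (rule Max_ge) auto
  finally show "c \<le> r" .
qed

lemma cone_r_lessE:
  fixes g :: "real^'n \<Rightarrow> real^'n"
  assumes "cone_r g < c"
  obtains x where "pos_vec x" "\<And>i. g x $ i < c * x$i"
proof -
  have "(\<lambda>x. Max (range (\<lambda>i. g x $ i / x $ i))) ` {x. pos_vec x} \<noteq> {}"
    using pos_vec_one by blast
  then obtain x where x: "pos_vec x" "Max (range (\<lambda>i. g x $ i / x $ i)) < c"
    using cInf_lessD[OF _ assms[unfolded cone_r_def]] by blast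
  then have "g x $ i < c * x$i" for i
    by (auto simp: pos_vec_def divide_less_eq)
  then show thesis using that x(1) by blast
qed

lemma restr0_nth: "restr0 f C x $ i = (if i \<in> C then f (proj0 C x) $ i else 0)"
  by (simp add: restr0_def proj0_def)

lemma nonneg_vec_proj0: "nonneg_vec x \<Longrightarrow> nonneg_vec (proj0 C x)"
  by (simp add: nonneg_vec_def proj0_def)

lemma restr0_UNIV: "restr0 f UNIV = f"
  by (simp add: restr0_def proj0_def fun_eq_iff)

context admissible_map
begin

lemma restr0_nonneg: "nonneg_vec x \<Longrightarrow> nonneg_vec (restr0 f C x)"
  using nonneg[OF nonneg_vec_proj0] by (simp add: nonneg_vec_def restr0_nth)

lemma proj0_eq: "D i \<subseteq> C \<Longrightarrow> nonneg_vec x \<Longrightarrow> f (proj0 C x) $ i = f x $ i"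
  by (intro depends_on nonneg_vec_proj0) (auto simp: proj0_def)

lemma cone_r_restr0_nonneg: "0 \<le> cone_r (restr0 f C)"
proof (rule cone_r_ge)
  fix y :: "real^'n" assume "pos_vec y"
  then show "\<exists>i. 0 * y$i \<le> restr0 f C y $ i"
    using restr0_nonneg[OF pos_imp_nonneg_vec] by (simp add: nonneg_vec_def)
qed

text \<open>Collatz--Wielandt formula; for the lower bound, y is compared with the largest multiple
  of x that lies below it on C.\<close>

lemma cone_r_restr0_eq:
  assumes "C \<noteq> {}" and closed: "\<And>i. i \<in> C \<Longrightarrow> D i \<subseteq> C"
    and x: "pos_vec x" and eig: "\<And>i. i \<in> C \<Longrightarrow> f x $ i = \<mu> * x$i"
  shows "cone_r (restr0 f C) = \<mu>"
proof (rule antisym)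
  have x_pos: "0 < x$i" for i using x by (simp add: pos_vec_def)
  obtain i0 where "i0 \<in> C" using \<open>C \<noteq> {}\<close> by blast
  have "0 < \<mu> * x$i0" using pos[OF x] eig[OF \<open>i0 \<in> C\<close>] by (metis pos_vec_def)
  then have "0 < \<mu>" using x_pos[of i0] by (simp add: zero_less_mult_iff)
  have fx: "f (proj0 C x) $ i = \<mu> * x$i" if "i \<in> C" for i
    using proj0_eq[OF closed[OF that] pos_imp_nonneg_vec[OF x]] eig[OF that] by simp
  show "cone_r (restr0 f C) \<le> \<mu>"
    using restr0_nonneg pos_imp_nonneg_vec x x_pos \<open>0 < \<mu>\<close>
    by (intro cone_r_le[of _ x]) (auto simp: restr0_nth fx less_imp_le)
  show "\<mu> \<le> cone_r (restr0 f C)"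
  proof (rule cone_r_ge)
    fix y :: "real^'n" assume y: "pos_vec y"
    obtain k where "k \<in> C" and k: "\<And>i. i \<in> C \<Longrightarrow> y$k / x$k \<le> y$i / x$i"
      using finite_arg_minE[OF finite \<open>C \<noteq> {}\<close>, of "\<lambda>i. y$i / x$i"] by blast
    define t where "t = y$k / x$k"
    have "0 < t" using x y by (simp add: t_def pos_vec_def)
    have "t *\<^sub>R proj0 C x \<le> proj0 C y"
      using k x_pos by (auto simp: less_eq_vec_def proj0_def t_def field_simps)
    then have "f (t *\<^sub>R proj0 C x) $ k \<le> f (proj0 C y) $ k"
      using mono nonneg_vec_scaleR[OF nonneg_vec_proj0[OF pos_imp_nonneg_vec[OF x]]] \<open>0 < t\<close>
      by (simp add: less_eq_vec_def)
    moreover have "f (t *\<^sub>R proj0 C x) $ k = \<mu> * y$k"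
      using homogeneous[OF nonneg_vec_proj0[OF pos_imp_nonneg_vec[OF x]] \<open>0 < t\<close>] fx[OF \<open>k \<in> C\<close>]
        x_pos[of k] by (simp add: t_def)
    ultimately show "\<exists>i. \<mu> * y$i \<le> restr0 f C y $ i"
      using \<open>k \<in> C\<close> by (auto simp: restr0_nth)
  qed
qed

lemma cone_r_restr0_less_strict:
  assumes y: "pos_vec y" and "C \<noteq> {}" and less: "\<And>k. k \<in> C \<Longrightarrow> f (proj0 C y) $ k < \<mu> * y$k"
  shows "cone_r (restr0 f C) < \<mu>"
proof -
  obtain c where "c \<in> C" using \<open>C \<noteq> {}\<close> by blast
  have "0 \<le> f (proj0 C y) $ c"
    using nonneg[OF nonneg_vec_proj0[OF pos_imp_nonneg_vec[OF y]]] by (simp add: nonneg_vec_def)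
  then have "0 < \<mu>"
    using less[OF \<open>c \<in> C\<close>] y by (smt (verit) mult_nonpos_nonneg pos_vec_def)
  show ?thesis
    using restr0_nonneg pos_imp_nonneg_vec y less \<open>0 < \<mu>\<close>
    by (intro cone_r_less[of _ y]) (auto simp: restr0_nth pos_vec_def)
qed

lemma restr0_lower_coordinate:
  assumes y: "pos_vec y" and less: "f (proj0 C y) $ k < \<mu> * y$k"
  obtains v where "0 < v" "v < y$k" "f (proj0 C (\<chi> i. if i = k then v else y$i)) $ k < \<mu> * v"
    "f (proj0 C (\<chi> i. if i = k then v else y$i)) \<le> f (proj0 C y)"
proof -
  define a where "a = f (proj0 C y) $ k"
  have "0 \<le> a" "0 < y$k"
    using nonneg[OF nonneg_vec_proj0[OF pos_imp_nonneg_vec[OF y]]] y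
    by (auto simp: a_def nonneg_vec_def pos_vec_def)
  then have "0 < \<mu>" using less by (smt (verit) a_def mult_nonpos_nonneg)
  then have "a / \<mu> < y$k" using less by (simp add: a_def divide_less_eq mult.commute)
  then obtain v where v: "a / \<mu> < v" "v < y$k" using dense by blast
  then have "a < \<mu> * v" using \<open>0 < \<mu>\<close> by (simp add: divide_less_eq mult.commute)
  then have "0 < v" using \<open>0 < \<mu>\<close> \<open>0 \<le> a\<close> by (meson le_less_trans zero_less_mult_pos)
  define y' where "y' = (\<chi> i. if i = k then v else y$i)"
  have "f (proj0 C y') \<le> f (proj0 C y)"
    using v(2) \<open>0 < v\<close> y
    by (intro mono) (auto simp: y'_def proj0_def nonneg_vec_def less_eq_vec_def pos_vec_def less_imp_le)
  moreover have "f (proj0 C y') $ k < \<mu> * v"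
    using calculation \<open>a < \<mu> * v\<close> by (auto simp: a_def less_eq_vec_def intro: le_less_trans)
  ultimately show thesis using that \<open>0 < v\<close> v(2) by (simp add: y'_def)
qed

text \<open>Strictness spreads from the coordinates where x is a strict supersolution along the
  dependencies, so that x can be lowered coordinate by coordinate inside C.\<close>

lemma cone_r_restr0_less:
  assumes x: "pos_vec x" and "C \<noteq> {}" and le: "\<And>k. k \<in> C \<Longrightarrow> f x $ k \<le> \<mu> * x$k"
    and spread: "\<And>T. T \<subset> C \<Longrightarrow> \<exists>k\<in>C - T. f x $ k < \<mu> * x$k \<or> (\<exists>j\<in>D k. j \<in> T \<or> j \<notin> C)"
  shows "cone_r (restr0 f C) < \<mu>"
proof -
  define P where "P T \<longleftrightarrow> (\<exists>y. pos_vec y \<and> y \<le> x \<and> (\<forall>k. k \<notin> T \<longrightarrow> y$k = x$k) \<and>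
      (\<forall>k\<in>T. y$k < x$k \<and> f (proj0 C y) $ k < \<mu> * y$k))" for T
  have "P C"
  proof (rule finite_subset_grow_induct)
    show "P {}" unfolding P_def using x by auto
    fix T assume "T \<subset> C" "P T"
    then obtain y where y: "pos_vec y" "y \<le> x" "\<And>k. k \<notin> T \<Longrightarrow> y$k = x$k"
        "\<And>k. k \<in> T \<Longrightarrow> y$k < x$k \<and> f (proj0 C y) $ k < \<mu> * y$k"
      unfolding P_def by blast
    obtain k where k: "k \<in> C" "k \<notin> T" and "f x $ k < \<mu> * x$k \<or> (\<exists>j\<in>D k. j \<in> T \<or> j \<notin> C)"
      using spread[OF \<open>T \<subset> C\<close>] by blast
    have y_nonneg: "nonneg_vec (proj0 C y)"
      using y(1) by (simp add: nonneg_vec_proj0 pos_imp_nonneg_vec)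
    have y_le: "proj0 C y \<le> x"
      using y(2) x by (auto simp: less_eq_vec_def proj0_def pos_vec_def less_imp_le)
    have "f (proj0 C y) $ k < \<mu> * y$k"
    proof (cases "f x $ k < \<mu> * x$k")
      case True
      moreover have "f (proj0 C y) $ k \<le> f x $ k"
        using mono[OF y_nonneg y_le] by (simp add: less_eq_vec_def)
      ultimately show ?thesis using y(3)[OF k(2)] by simp
    next
      case False
      then obtain j where "j \<in> D k" "j \<in> T \<or> j \<notin> C"
        using \<open>f x $ k < \<mu> * x$k \<or> _\<close> by blast
      then have "proj0 C y $ j < x $ j"
        using y(4) x by (auto simp: proj0_def pos_vec_def)
      then have "f (proj0 C y) $ k < f x $ k"
        using strict_mono[OF \<open>j \<in> D k\<close> y_nonneg x y_le] by blast
      then show ?thesis using le[OF k(1)] y(3)[OF k(2)] by simp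
    qed
    then obtain v where v: "0 < v" "v < y$k" and y': "f (proj0 C (\<chi> i. if i = k then v else y$i)) $ k < \<mu> * v"
        "f (proj0 C (\<chi> i. if i = k then v else y$i)) \<le> f (proj0 C y)"
      using restr0_lower_coordinate[OF y(1)] by blast
    have "P (insert k T)"
      unfolding P_def
    proof (intro exI conjI allI ballI impI)
      show "pos_vec (\<chi> i. if i = k then v else y$i)" using y(1) v(1) by (simp add: pos_vec_def)
      show "(\<chi> i. if i = k then v else y$i) \<le> x"
        using y(2) y(3)[OF k(2)] v(2) by (simp add: less_eq_vec_def)
      fix i
      show "i \<notin> insert k T \<Longrightarrow> (\<chi> i. if i = k then v else y$i) $ i = x$i" using y(3) by simp
      assume "i \<in> insert k T"
      then show "(\<chi> i. if i = k then v else y$i) $ i < x$i"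
          "f (proj0 C (\<chi> i. if i = k then v else y$i)) $ i < \<mu> * (\<chi> i. if i = k then v else y$i) $ i"
        using y(3,4) y(3)[OF k(2)] v y' by (auto simp: less_eq_vec_def intro: le_less_trans)
    qed
    then show "\<exists>T'. T \<subset> T' \<and> T' \<subseteq> C \<and> P T'"
      using k \<open>T \<subset> C\<close> by blast
  qed simp
  then obtain y where "pos_vec y" "\<And>k. k \<in> C \<Longrightarrow> f (proj0 C y) $ k < \<mu> * y$k"
    unfolding P_def by blast
  then show ?thesis using cone_r_restr0_less_strict \<open>C \<noteq> {}\<close> by blast
qed

section \<open>Necessity of strong nonnegativity, and uniqueness\<close>

lemma eigvec_cone_r: "pos_vec x \<Longrightarrow> f x = \<mu> *\<^sub>R x \<Longrightarrow> cone_r f = \<mu>"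
  using cone_r_restr0_eq[of UNIV x \<mu>] by (simp add: restr0_UNIV)

theorem eigvec_imp_strongly_nonneg:
  assumes "pos_eigvec f x"
  shows "strongly_nonneg f"
proof -
  obtain \<mu> where x: "pos_vec x" "f x = \<mu> *\<^sub>R x" using assms by (auto simp: pos_eigvec_def)
  have "cone_r (restr0 f C) = \<mu>" if "final_class f C" for C
    using cone_r_restr0_eq[OF final_class_nonempty[OF that] _ x(1)] final_class_closed[OF that] x(2)
    by (simp add: arc_closed_iff)
  moreover have "cone_r (restr0 f C) < \<mu>" if C: "scc f C" "\<not> final_class f C" for C
  proof (rule cone_r_restr0_less[OF x(1) scc_nonempty[OF C(1)]])
    show "f x $ k \<le> \<mu> * x$k" for k using x(2) by simp
    fix T assume "T \<subset> C"
    then show "\<exists>k\<in>C - T. f x $ k < \<mu> * x$k \<or> (\<exists>j\<in>D k. j \<in> T \<or> j \<notin> C)"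
      using scc_exit_arc[OF C(1) \<open>T \<subset> C\<close>] C(2) by (auto simp: arc_iff)
  qed
  ultimately show ?thesis
    unfolding strongly_nonneg_def eigvec_cone_r[OF x] by blast
qed

text \<open>Knaster--Tarski between a sub- and a supersolution, in the conditionally complete
  lattice of vectors.\<close>

lemma eigvec_between:
  assumes "0 < \<mu>" "pos_vec v" "v \<le> w" "\<mu> *\<^sub>R v \<le> f v" "f w \<le> \<mu> *\<^sub>R w"
  obtains y where "pos_vec y" "v \<le> y" "y \<le> w" "f y = \<mu> *\<^sub>R y"
proof -
  define h where "h z = (1 / \<mu>) *\<^sub>R f z" for z
  have h_mono: "h a \<le> h b" if "v \<le> a" "a \<le> b" for a b
    using mono[OF nonneg_vec_mono[OF pos_imp_nonneg_vec[OF \<open>pos_vec v\<close>] that(1)] that(2)] \<open>0 < \<mu>\<close>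
    by (simp add: h_def scaleR_left_mono)
  have "v \<le> h v" "h w \<le> w"
    using assms(4,5) \<open>0 < \<mu>\<close> by (auto simp: h_def less_eq_vec_def field_simps)
  define A where "A = {z. v \<le> z \<and> z \<le> w \<and> z \<le> h z}"
  define y where "y = Sup A"
  have "v \<in> A" using \<open>v \<le> w\<close> \<open>v \<le> h v\<close> by (simp add: A_def)
  have "bdd_above A" by (auto simp: A_def bdd_above_def)
  have z_le_y: "z \<le> y" if "z \<in> A" for z
    unfolding y_def using that \<open>bdd_above A\<close> by (rule cSup_upper)
  have "v \<le> y" using z_le_y[OF \<open>v \<in> A\<close>] .
  have "y \<le> w" unfolding y_def using \<open>v \<in> A\<close> by (intro cSup_least) (auto simp: A_def)
  have "y \<le> h y" unfolding y_def
  proof (rule cSup_least)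
    fix z assume "z \<in> A"
    then have "z \<le> h z" "h z \<le> h y"
      using h_mono z_le_y by (auto simp: A_def)
    then show "z \<le> h (Sup A)" by (simp add: y_def)
  qed (use \<open>v \<in> A\<close> in blast)
  have "h y \<in> A"
    using \<open>v \<le> h v\<close> \<open>h w \<le> w\<close> \<open>v \<le> y\<close> \<open>y \<le> w\<close> \<open>y \<le> h y\<close> h_mono
    by (auto simp: A_def intro: order_trans)
  then have "y = h y" using z_le_y \<open>y \<le> h y\<close> by (simp add: antisym)
  then have "f y = \<mu> *\<^sub>R y"
    using \<open>0 < \<mu>\<close> by (simp add: h_def vec_eq_iff field_simps)
  moreover have "pos_vec y"
    using \<open>pos_vec v\<close> \<open>v \<le> y\<close> by (auto simp: pos_vec_def less_eq_vec_def intro: less_le_trans)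
  ultimately show thesis using that \<open>v \<le> y\<close> \<open>y \<le> w\<close> by blast
qed

text \<open>By strict monotonicity no arc leaves the set where t x touches y from below.\<close>

lemma eigvec_contact_closed:
  assumes x: "pos_vec x" "f x = \<mu> *\<^sub>R x" and y: "pos_vec y" "f y = \<mu> *\<^sub>R y"
    and "0 < t" "t *\<^sub>R x \<le> y"
  shows "arc_closed f {i. y$i = t * x$i}"
  unfolding arc_closed_iff
proof (intro ballI subsetI CollectI)
  fix i j assume i: "i \<in> {i. y$i = t * x$i}" and "j \<in> D i"
  show "y$j = t * x$j"
  proof (rule ccontr)
    assume "y$j \<noteq> t * x$j"
    then have "(t *\<^sub>R x) $ j < y $ j" using \<open>t *\<^sub>R x \<le> y\<close> by (auto simp: less_eq_vec_def order_less_le)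
    then have "f (t *\<^sub>R x) $ i < f y $ i"
      using strict_mono[OF \<open>j \<in> D i\<close> nonneg_vec_scaleR[OF pos_imp_nonneg_vec[OF x(1)]] y(1)]
        \<open>0 < t\<close> \<open>t *\<^sub>R x \<le> y\<close> by simp
    then show False
      using homogeneous[OF pos_imp_nonneg_vec[OF x(1)] \<open>0 < t\<close>] x(2) y(2) i by simp
  qed
qed

theorem eigvec_unique_if_unique_final_class:
  assumes "\<exists>!C. final_class f C" and "pos_eigvec f x" "pos_eigvec f y"
  shows "\<exists>c. y = c *\<^sub>R x"
proof -
  obtain \<mu> \<mu>' where x: "pos_vec x" "f x = \<mu> *\<^sub>R x" and y: "pos_vec y" "f y = \<mu>' *\<^sub>R y"
    using assms(2,3) by (auto simp: pos_eigvec_def)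
  have "\<mu>' = \<mu>" using eigvec_cone_r[OF x] eigvec_cone_r[OF y] by simp
  define t where "t = Min (range (\<lambda>i. y$i / x$i))"
  define T where "T = Max (range (\<lambda>i. y$i / x$i))"
  have x_pos: "0 < x$i" and y_pos: "0 < y$i" for i
    using x(1) y(1) by (auto simp: pos_vec_def)
  have "t \<in> range (\<lambda>i. y$i / x$i)" "T \<in> range (\<lambda>i. y$i / x$i)"
    unfolding t_def T_def by (auto intro: Min_in Max_in)
  then obtain i1 i2 where i1: "y$i1 = t * x$i1" and i2: "y$i2 = T * x$i2"
    using x_pos by (metis (no_types, lifting) divide_eq_eq imageE less_irrefl)
  have "0 < t" using i1 x_pos[of i1] y_pos[of i1] by (simp add: zero_less_mult_iff)
  have "0 < T" using i2 x_pos[of i2] y_pos[of i2] by (simp add: zero_less_mult_iff)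
  have "t \<le> y$i / x$i" "y$i / x$i \<le> T" for i
    unfolding t_def T_def by (auto intro: Min_le Max_ge)
  then have t_le: "t *\<^sub>R x \<le> y" and T_ge: "(1 / T) *\<^sub>R y \<le> x"
    using x_pos \<open>0 < T\<close> by (auto simp: less_eq_vec_def field_simps)
  have "arc_closed f {i. y$i = t * x$i}"
    using eigvec_contact_closed[OF x y(1) _ \<open>0 < t\<close> t_le] y(2) \<open>\<mu>' = \<mu>\<close> by simp
  then obtain C1 where C1: "final_class f C1" "C1 \<subseteq> {i. y$i = t * x$i}"
    using closed_contains_final_class i1 by blast
  have "{i. x$i = (1 / T) * y$i} = {i. y$i = T * x$i}"
    using \<open>0 < T\<close> by (auto simp: field_simps)
  moreover have "arc_closed f {i. x$i = (1 / T) * y$i}"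
    using eigvec_contact_closed[OF y(1) _ x _ T_ge] y(2) \<open>\<mu>' = \<mu>\<close> \<open>0 < T\<close> by simp
  ultimately obtain C2 where C2: "final_class f C2" "C2 \<subseteq> {i. y$i = T * x$i}"
    using closed_contains_final_class i2 by (metis (mono_tags, lifting) empty_iff mem_Collect_eq)
  have "C1 = C2" using assms(1) C1(1) C2(1) by blast
  then obtain k where "y$k = t * x$k" "y$k = T * x$k"
    using C1 C2 final_class_nonempty by blast
  then have "t = T" using x_pos[of k] by simp
  then have "y = t *\<^sub>R x"
    using t_le T_ge \<open>0 < T\<close> x_pos by (auto simp: vec_eq_iff less_eq_vec_def field_simps intro: antisym)
  then show ?thesis by blast
qed

lemma eigvec_pos_eigenvalue:
  assumes "pos_vec x" "f x = \<mu> *\<^sub>R x"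
  shows "0 < \<mu>"
proof -
  have "0 < f x $ i" "0 < x$i" for i using pos[OF assms(1)] assms(1) by (auto simp: pos_vec_def)
  then have "0 < \<mu> * x$i" "0 < x$i" for i using assms(2) by auto
  then show ?thesis by (meson zero_less_mult_pos2)
qed

lemma eigvec_doubled_on_final_class:
  assumes x: "pos_vec x" "f x = \<mu> *\<^sub>R x" and C1: "final_class f C1" and C2: "final_class f C2"
    and "C1 \<inter> C2 = {}"
  obtains y where "pos_eigvec f y" "\<And>i. i \<in> C1 \<Longrightarrow> y$i = x$i" "\<And>i. i \<in> C2 \<Longrightarrow> y$i = 2 * x$i"
proof -
  have x_pos: "0 < x$i" for i using x(1) by (simp add: pos_vec_def)
  have x2: "f ((2::real) *\<^sub>R x) $ i = 2 * (\<mu> * x$i)" for i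
    using homogeneous[OF pos_imp_nonneg_vec[OF x(1)], of 2] x(2) by simp
  have closed: "D i \<subseteq> C" if "final_class f C" "i \<in> C" for C i
    using final_class_closed[OF that(1)] that(2) by (simp add: arc_closed_iff)
  define v where "v = (\<chi> i. if i \<in> C2 then 2 * x$i else x$i)"
  define w where "w = (\<chi> i. if i \<in> C1 then x$i else 2 * x$i)"
  have "pos_vec v" using x_pos by (simp add: v_def pos_vec_def)
  have "v \<le> w" using \<open>C1 \<inter> C2 = {}\<close> x_pos by (auto simp: v_def w_def less_eq_vec_def)
  have "\<mu> * v$i \<le> f v $ i" for i
  proof (cases "i \<in> C2")
    case True
    then have "f v $ i = f ((2::real) *\<^sub>R x) $ i"
      using closed[OF C2 True] x_pos by (intro depends_on) (auto simp: v_def nonneg_vec_def less_imp_le)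
    then show ?thesis using True x2 by (simp add: v_def)
  next
    case False
    have "f x $ i \<le> f v $ i"
      using mono[OF pos_imp_nonneg_vec[OF x(1)], of v] x_pos by (auto simp: v_def less_eq_vec_def less_imp_le)
    then show ?thesis using False x(2) by (simp add: v_def)
  qed
  moreover have "f w $ i \<le> \<mu> * w$i" for i
  proof (cases "i \<in> C1")
    case True
    then have "f w $ i = f x $ i"
      using closed[OF C1 True] x_pos by (intro depends_on) (auto simp: w_def nonneg_vec_def less_imp_le)
    then show ?thesis using True x(2) by (simp add: w_def)
  next
    case False
    have "f w $ i \<le> f ((2::real) *\<^sub>R x) $ i"
      using mono[of w "2 *\<^sub>R x"] x_pos by (auto simp: w_def less_eq_vec_def nonneg_vec_def less_imp_le)
    then show ?thesis using False x2 by (simp add: w_def)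
  qed
  ultimately obtain y where y: "pos_vec y" "v \<le> y" "y \<le> w" "f y = \<mu> *\<^sub>R y"
    using eigvec_between[OF eigvec_pos_eigenvalue[OF x] \<open>pos_vec v\<close> \<open>v \<le> w\<close>]
    by (auto simp: less_eq_vec_def)
  have vy: "v$i \<le> y$i" and yw: "y$i \<le> w$i" for i
    using y(2,3) by (simp_all add: less_eq_vec_def)
  have "y$i = x$i" if "i \<in> C1" for i
  proof -
    have "i \<notin> C2" using that \<open>C1 \<inter> C2 = {}\<close> by blast
    then show ?thesis using vy[of i] yw[of i] that by (simp add: v_def w_def)
  qed
  moreover have "y$i = 2 * x$i" if "i \<in> C2" for i
  proof -
    have "i \<notin> C1" using that \<open>C1 \<inter> C2 = {}\<close> by blast
    then show ?thesis using vy[of i] yw[of i] that by (simp add: v_def w_def)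
  qed
  ultimately show thesis using that y(1,4) by (auto simp: pos_eigvec_def)
qed

theorem unique_final_class_if_eigvec_unique:
  assumes "pos_eigvec f x" and uniq: "\<forall>x y. pos_eigvec f x \<and> pos_eigvec f y \<longrightarrow> (\<exists>c. y = c *\<^sub>R x)"
  shows "\<exists>!C. final_class f C"
proof -
  obtain \<mu> where x: "pos_vec x" "f x = \<mu> *\<^sub>R x" using assms(1) by (auto simp: pos_eigvec_def)
  have "C1 = C2" if C1: "final_class f C1" and C2: "final_class f C2" for C1 C2
  proof (rule ccontr)
    assume "C1 \<noteq> C2"
    then have "C1 \<inter> C2 = {}" using scc_disjoint C1 C2 by (auto simp: final_class_def)
    then obtain y where y: "pos_eigvec f y" "\<And>i. i \<in> C1 \<Longrightarrow> y$i = x$i" "\<And>i. i \<in> C2 \<Longrightarrow> y$i = 2 * x$i"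
      using eigvec_doubled_on_final_class[OF x C1 C2] by blast
    obtain c where c: "y = c *\<^sub>R x" using uniq assms(1) y(1) by blast
    obtain k1 k2 where "k1 \<in> C1" "k2 \<in> C2" using C1 C2 final_class_nonempty by blast
    then have "c * x$k1 = x$k1" "c * x$k2 = 2 * x$k2" using y(2,3) c by auto
    moreover have "0 < x$k1" "0 < x$k2" using x(1) by (simp_all add: pos_vec_def)
    ultimately show False by simp
  qed
  moreover obtain C where "final_class f C" by (rule exists_final_class)
  ultimately show ?thesis by blast
qed

section \<open>Eigenvectors on final classes\<close>

lemma supersolution_spread_path:
  assumes closed: "\<And>i. i \<in> C \<Longrightarrow> D i \<subseteq> C" and "0 \<le> B" "k \<in> C" "reach f k j"
  shows "\<exists>\<rho>. \<forall>z. pos_vec z \<longrightarrow> (\<forall>i\<in>C. f z $ i \<le> B * z$i) \<longrightarrow> (\<forall>i\<in>C. z$k \<le> z$i) \<longrightarrow>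
    z$j \<le> \<rho> * z$k"
proof -
  have "(k, j) \<in> {(a, b). arc f a b}\<^sup>*" using \<open>reach f k j\<close> by (simp add: reach_def)
  then show ?thesis
  proof (induction rule: rtrancl_induct)
    case base
    show ?case by (rule exI[of _ 1]) simp
  next
    case (step l l')
    then obtain \<rho> where \<rho>: "\<forall>z. pos_vec z \<longrightarrow> (\<forall>i\<in>C. f z $ i \<le> B * z$i) \<longrightarrow>
        (\<forall>i\<in>C. z$k \<le> z$i) \<longrightarrow> z$l \<le> \<rho> * z$k" by blast
    have "l \<in> C"
      using arc_closed_reach[of f C k l] closed \<open>k \<in> C\<close> step.hyps(1)
      by (simp add: arc_closed_iff reach_def)
    have "l' \<in> D l" using step.hyps(2) arc_iff by simp
    then obtain \<kappa> \<theta> where "0 < \<kappa>" "0 < \<theta>" and G: "power_growth (\<lambda>x. f x $ l) (D l) l' \<kappa> \<theta>"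
      using growth by blast
    show ?case
    proof (intro exI allI impI)
      fix z :: "real^'n"
      assume z: "pos_vec z" and super: "\<forall>i\<in>C. f z $ i \<le> B * z$i" and min: "\<forall>i\<in>C. z$k \<le> z$i"
      have "0 < z$k" "0 \<le> z$l'" using z by (auto simp: pos_vec_def less_imp_le)
      have "\<kappa> * z$k powr (1 - \<theta>) * z$l' powr \<theta> \<le> f z $ l"
        using power_growthD[OF G pos_imp_nonneg_vec[OF z] \<open>0 < z$k\<close>] min closed[OF \<open>l \<in> C\<close>]
        by blast
      also have "\<dots> \<le> B * z$l" using super \<open>l \<in> C\<close> by blast
      also have "\<dots> \<le> B * \<rho> * z$k"
        using \<rho> z super min \<open>0 \<le> B\<close> by (simp add: mult_left_mono mult.assoc)
      finally have "\<kappa> * z$k powr (1 - \<theta>) * z$l' powr \<theta> \<le> B * \<rho> * z$k" .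
      then show "z$l' \<le> (B * \<rho> / \<kappa>) powr (1 / \<theta>) * z$k"
        using \<open>0 < z$k\<close> \<open>0 \<le> z$l'\<close> \<open>0 < \<kappa>\<close> \<open>0 < \<theta>\<close> by (intro powr_interpolation_le_imp_le)
    qed
  qed
qed

text \<open>A Harnack-type bound: starting from a minimal coordinate, the growth bound along each arc
  bounds the next coordinate by a multiple of the minimum.\<close>

lemma supersolution_spread_bound:
  assumes closed: "\<And>i. i \<in> C \<Longrightarrow> D i \<subseteq> C" and conn: "\<And>i j. i \<in> C \<Longrightarrow> j \<in> C \<Longrightarrow> reach f i j"
    and "0 \<le> B"
  obtains R where "1 \<le> R" "\<And>z i j. pos_vec z \<Longrightarrow> (\<And>k. k \<in> C \<Longrightarrow> f z $ k \<le> B * z$k) \<Longrightarrow>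
    i \<in> C \<Longrightarrow> j \<in> C \<Longrightarrow> z$j \<le> R * z$i"
proof -
  define Q where "Q z k \<longleftrightarrow> pos_vec z \<and> (\<forall>i\<in>C. f z $ i \<le> B * z$i) \<and> (\<forall>i\<in>C. z$k \<le> z$i)"
    for z k
  have "\<forall>\<^sub>F \<rho> in at_top. \<forall>z. Q z k \<longrightarrow> z$j \<le> \<rho> * z$k" if kj: "k \<in> C" "j \<in> C" for k j
  proof -
    obtain \<rho> where \<rho>: "\<And>z. Q z k \<Longrightarrow> z$j \<le> \<rho> * z$k"
      using supersolution_spread_path[OF closed \<open>0 \<le> B\<close> kj(1) conn[OF kj]]
      unfolding Q_def by blast
    have \<rho>_mono: "z$j \<le> \<rho>' * z$k" if "\<rho> \<le> \<rho>'" "Q z k" for \<rho>' z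
    proof -
      have "0 < z$k" using \<open>Q z k\<close> by (simp add: Q_def pos_vec_def)
      then show ?thesis using \<rho>[OF \<open>Q z k\<close>] \<open>\<rho> \<le> \<rho>'\<close> by (smt (verit) mult_right_mono)
    qed
    show ?thesis
      using eventually_ge_at_top[of \<rho>] by (rule eventually_mono) (blast intro: \<rho>_mono)
  qed
  then have "\<forall>\<^sub>F \<rho> in at_top. 1 \<le> \<rho> \<and> (\<forall>k\<in>C. \<forall>j\<in>C. \<forall>z. Q z k \<longrightarrow> z$j \<le> \<rho> * z$k)"
    by (intro eventually_conj eventually_ge_at_top eventually_ball_finite ballI) auto
  then obtain R where R: "1 \<le> R" "\<And>k j z. k \<in> C \<Longrightarrow> j \<in> C \<Longrightarrow> Q z k \<Longrightarrow> z$j \<le> R * z$k"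
    unfolding eventually_at_top_linorder by blast
  show thesis
  proof (rule that[OF R(1)])
    fix z :: "real^'n" and i j
    assume z: "pos_vec z" "\<And>k. k \<in> C \<Longrightarrow> f z $ k \<le> B * z$k" and "i \<in> C" "j \<in> C"
    obtain k where "k \<in> C" and k: "\<And>i. i \<in> C \<Longrightarrow> z$k \<le> z$i"
      using finite_arg_minE[OF finite, of C "\<lambda>i. z$i"] \<open>i \<in> C\<close> by blast
    then have "z$j \<le> R * z$k" using R(2) z \<open>j \<in> C\<close> by (simp add: Q_def)
    also have "\<dots> \<le> R * z$i" using k[OF \<open>i \<in> C\<close>] \<open>1 \<le> R\<close> by simp
    finally show "z$j \<le> R * z$i" .
  qed
qed

lemma normalized_supersolution:
  assumes closed: "\<And>i. i \<in> C \<Longrightarrow> D i \<subseteq> C" and "C \<noteq> {}" and "cone_r (restr0 f C) < c"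
  obtains z where "pos_vec z" "(\<Sum>i\<in>C. z$i) = 1" "\<And>i. i \<notin> C \<Longrightarrow> z$i = 1"
    "\<And>i. i \<in> C \<Longrightarrow> f z $ i < c * z$i"
proof -
  obtain y where y: "pos_vec y" "\<And>i. restr0 f C y $ i < c * y$i"
    using cone_r_lessE[OF assms(3)] by blast
  define s where "s = (\<Sum>i\<in>C. y$i)"
  have "0 < s" using y(1) \<open>C \<noteq> {}\<close> by (simp add: s_def pos_vec_def sum_pos)
  define z where "z = (\<chi> i. if i \<in> C then y$i / s else 1)"
  have "f z $ i = f (proj0 C y) $ i / s" if "i \<in> C" for i
  proof -
    have "f z $ i = f ((1 / s) *\<^sub>R proj0 C y) $ i"
      using closed[OF that] y(1) \<open>0 < s\<close>
      by (intro depends_on) (auto simp: z_def proj0_def nonneg_vec_def pos_vec_def less_imp_le)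
    also have "\<dots> = f (proj0 C y) $ i / s"
      using homogeneous[OF nonneg_vec_proj0[OF pos_imp_nonneg_vec[OF y(1)]], of "1 / s"] \<open>0 < s\<close>
      by simp
    finally show ?thesis .
  qed
  moreover have "f (proj0 C y) $ i < c * y$i" if "i \<in> C" for i
    using y(2)[of i] that by (simp add: restr0_nth)
  ultimately have "f z $ i < c * z$i" if "i \<in> C" for i
    using that \<open>0 < s\<close> by (simp add: z_def divide_strict_right_mono)
  moreover have "pos_vec z" using y(1) \<open>0 < s\<close> by (simp add: z_def pos_vec_def)
  moreover have "(\<Sum>i\<in>C. z$i) = 1"
    using \<open>0 < s\<close> by (simp add: z_def s_def sum_divide_distrib[symmetric])
  ultimately show thesis using that by (simp add: z_def)
qed

lemma final_class_subeigvec_eq: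
  assumes C: "final_class f C" and u: "pos_vec u"
    and le: "\<And>i. i \<in> C \<Longrightarrow> f u $ i \<le> cone_r (restr0 f C) * u$i" and "i \<in> C"
  shows "f u $ i = cone_r (restr0 f C) * u$i"
proof (rule ccontr)
  assume "f u $ i \<noteq> cone_r (restr0 f C) * u$i"
  then have strict: "f u $ i < cone_r (restr0 f C) * u$i" using le[OF \<open>i \<in> C\<close>] by simp
  have "cone_r (restr0 f C) < cone_r (restr0 f C)"
  proof (rule cone_r_restr0_less[OF u final_class_nonempty[OF C] le])
    fix T assume "T \<subset> C"
    show "\<exists>k\<in>C - T. f u $ k < cone_r (restr0 f C) * u$k \<or> (\<exists>j\<in>D k. j \<in> T \<or> j \<notin> C)"
    proof (cases "i \<in> T")
      case True
      then have "T \<noteq> {}" by blast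
      then show ?thesis
        using scc_exit_arc[of f C T] C \<open>T \<subset> C\<close> by (auto simp: final_class_def arc_iff)
    qed (use strict \<open>i \<in> C\<close> in blast)
  qed
  then show False by simp
qed

lemma final_class_supersolution_box:
  assumes C: "final_class f C" and "0 \<le> B"
  obtains a where "pos_vec a" "\<And>z. pos_vec z \<Longrightarrow> (\<Sum>i\<in>C. z$i) = 1 \<Longrightarrow> (\<And>i. i \<notin> C \<Longrightarrow> z$i = 1) \<Longrightarrow>
    (\<And>k. k \<in> C \<Longrightarrow> f z $ k \<le> B * z$k) \<Longrightarrow> z \<in> cbox a 1"
proof -
  have closed: "\<And>i. i \<in> C \<Longrightarrow> D i \<subseteq> C"
    using final_class_closed[OF C] by (simp add: arc_closed_iff)
  have "C \<noteq> {}" using final_class_nonempty[OF C] .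
  obtain R where "1 \<le> R" and spread: "\<And>z i j. pos_vec z \<Longrightarrow> (\<And>k. k \<in> C \<Longrightarrow> f z $ k \<le> B * z$k) \<Longrightarrow>
      i \<in> C \<Longrightarrow> j \<in> C \<Longrightarrow> z$j \<le> R * z$i"
    using supersolution_spread_bound[OF closed _ \<open>0 \<le> B\<close>] C by (metis final_class_def scc_reach)
  define a :: "real^'n" where "a = (\<chi> i. if i \<in> C then 1 / (card C * R) else 1)"
  have "pos_vec a" using \<open>1 \<le> R\<close> \<open>C \<noteq> {}\<close> by (simp add: a_def pos_vec_def card_gt_0_iff)
  moreover have "z \<in> cbox a 1"
    if z: "pos_vec z" "(\<Sum>i\<in>C. z$i) = 1" "\<And>i. i \<notin> C \<Longrightarrow> z$i = 1" "\<And>k. k \<in> C \<Longrightarrow> f z $ k \<le> B * z$k"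
    for z
    unfolding mem_box_cart
  proof
    fix i
    show "a $ i \<le> z $ i \<and> z $ i \<le> 1 $ i"
    proof (cases "i \<in> C")
      case True
      then have "z$j \<le> R * z$i" if "j \<in> C" for j
        using spread[OF z(1) z(4)] that by blast
      then have "1 \<le> card C * R * z$i"
        using sum_mono[of C "\<lambda>j. z$j" "\<lambda>j. R * z$i"] z(2) by simp
      moreover have "z$i \<le> 1"
        using member_le_sum[of i C "\<lambda>j. z$j"] z(1,2) True by (simp add: pos_vec_def less_imp_le)
      ultimately show ?thesis
        using True \<open>1 \<le> R\<close> \<open>C \<noteq> {}\<close> by (simp add: a_def field_simps card_gt_0_iff)
    qed (simp add: a_def z(3))
  qed
  ultimately show thesis using that by blast
qed

text \<open>A minimizing sequence of normalized supersolutions stays in a compact box of positive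
  vectors, so it has a positive limit point; the limit is a subeigenvector and hence, the class
  being final, an eigenvector.\<close>

lemma eigvec_on_final_class:
  assumes C: "final_class f C"
  obtains u where "pos_vec u" "\<And>i. i \<in> C \<Longrightarrow> f u $ i = cone_r (restr0 f C) * u$i"
proof -
  define \<rho> where "\<rho> = cone_r (restr0 f C)"
  have closed: "\<And>i. i \<in> C \<Longrightarrow> D i \<subseteq> C"
    using final_class_closed[OF C] by (simp add: arc_closed_iff)
  have "0 \<le> \<rho>" unfolding \<rho>_def by (rule cone_r_restr0_nonneg)
  obtain a where "pos_vec a" and box: "\<And>z. pos_vec z \<Longrightarrow> (\<Sum>i\<in>C. z$i) = 1 \<Longrightarrow>
      (\<And>i. i \<notin> C \<Longrightarrow> z$i = 1) \<Longrightarrow> (\<And>k. k \<in> C \<Longrightarrow> f z $ k \<le> (\<rho> + 1) * z$k) \<Longrightarrow> z \<in> cbox a 1"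
    using final_class_supersolution_box[OF C, of "\<rho> + 1"] \<open>0 \<le> \<rho>\<close> by auto
  have "\<exists>z. pos_vec z \<and> (\<Sum>i\<in>C. z$i) = 1 \<and> (\<forall>i. i \<notin> C \<longrightarrow> z$i = 1) \<and>
      (\<forall>i\<in>C. f z $ i < (\<rho> + 1 / Suc n) * z$i)" for n
    using normalized_supersolution[OF closed final_class_nonempty[OF C], of "\<rho> + 1 / Suc n"]
    unfolding \<rho>_def by (metis less_add_same_cancel1 of_nat_0_less_iff zero_less_Suc zero_less_divide_1_iff)
  then obtain z where z_pos: "\<And>n. pos_vec (z n)" and z_sum: "\<And>n. (\<Sum>i\<in>C. z n $ i) = 1"
    and z_out: "\<And>n i. i \<notin> C \<Longrightarrow> z n $ i = 1"
    and z_super: "\<And>n i. i \<in> C \<Longrightarrow> f (z n) $ i < (\<rho> + 1 / Suc n) * z n $ i"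
    by metis
  have z_box: "z n \<in> cbox a 1" for n
  proof (rule box[OF z_pos z_sum z_out])
    fix k assume "k \<in> C"
    have "1 / real (Suc n) \<le> 1" by simp
    then have "(\<rho> + 1 / Suc n) * z n $ k \<le> (\<rho> + 1) * z n $ k"
      using z_pos[of n] by (intro mult_right_mono) (auto simp: pos_vec_def less_imp_le)
    then show "f (z n) $ k \<le> (\<rho> + 1) * z n $ k" using z_super[OF \<open>k \<in> C\<close>, of n] by simp
  qed
  obtain u r where "u \<in> cbox a 1" "strict_mono r" and lim: "(z \<circ> r) \<longlonglongrightarrow> u"
    using compact_cbox[of a 1] z_box unfolding compact_def by metis
  have "pos_vec u"
    using \<open>pos_vec a\<close> \<open>u \<in> cbox a 1\<close> by (auto simp: pos_vec_def mem_box_cart intro: less_le_trans)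
  have "f u $ i \<le> \<rho> * u$i" if "i \<in> C" for i
  proof (rule LIMSEQ_le)
    have "(\<lambda>n. f (z (r n))) \<longlonglongrightarrow> f u"
      using lim \<open>pos_vec u\<close> z_pos
      by (intro continuous_on_tendsto_compose[OF continuous])
        (auto simp: o_def pos_imp_nonneg_vec)
    then show "(\<lambda>n. f (z (r n)) $ i) \<longlonglongrightarrow> f u $ i" by (rule tendsto_vec_nth)
    have "(\<lambda>n. 1 / real (Suc (r n))) \<longlonglongrightarrow> 0"
      using LIMSEQ_subseq_LIMSEQ[OF LIMSEQ_inverse_real_of_nat \<open>strict_mono r\<close>]
      by (simp add: o_def inverse_eq_divide)
    moreover have "(\<lambda>n. z (r n) $ i) \<longlonglongrightarrow> u $ i"
      using tendsto_vec_nth[OF lim] by (simp add: o_def)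
    ultimately have "(\<lambda>n. (\<rho> + 1 / Suc (r n)) * z (r n) $ i) \<longlonglongrightarrow> (\<rho> + 0) * u $ i"
      by (intro tendsto_mult tendsto_add tendsto_const)
    then show "(\<lambda>n. (\<rho> + 1 / Suc (r n)) * z (r n) $ i) \<longlonglongrightarrow> \<rho> * u $ i" by simp
    show "\<exists>N. \<forall>n\<ge>N. f (z (r n)) $ i \<le> (\<rho> + 1 / Suc (r n)) * z (r n) $ i"
      using z_super[OF that] by (auto intro: less_imp_le)
  qed
  then show thesis
    using that[OF \<open>pos_vec u\<close>] final_class_subeigvec_eq[OF C \<open>pos_vec u\<close>] unfolding \<rho>_def by blast
qed

lemma cone_r_restr0_final_class_pos:
  assumes "final_class f C"
  shows "0 < cone_r (restr0 f C)"
proof -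
  obtain u where u: "pos_vec u" "\<And>i. i \<in> C \<Longrightarrow> f u $ i = cone_r (restr0 f C) * u$i"
    using eigvec_on_final_class[OF assms] by blast
  obtain i where "i \<in> C" using final_class_nonempty[OF assms] by blast
  have "0 < f u $ i" "0 < u$i" using pos[OF u(1)] u(1) by (auto simp: pos_vec_def)
  then show ?thesis using u(2)[OF \<open>i \<in> C\<close>] by (simp add: zero_less_mult_iff)
qed

end

section \<open>Sufficiency of strong nonnegativity\<close>

definition power_profile :: "'n set \<Rightarrow> ('n \<Rightarrow> real) \<Rightarrow> real^'n \<Rightarrow> real \<Rightarrow> real^'n" where
  "power_profile C q v \<delta> = (\<chi> i. if i \<in> C then \<delta> powr (1 - q i) else v$i)"

lemma power_profile_pos: "pos_vec v \<Longrightarrow> 0 < \<delta> \<Longrightarrow> pos_vec (power_profile C q v \<delta>)"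
  by (simp add: power_profile_def pos_vec_def)

lemma power_profile_bounds:
  assumes "i \<in> C" "0 < q i" "q i \<le> 1" "0 < \<delta>" "\<delta> \<le> 1"
  shows "\<delta> \<le> power_profile C q v \<delta> $ i \<and> power_profile C q v \<delta> $ i \<le> 1"
  using assms powr_mono'[of "1 - q i" 1 \<delta>] powr_le1[of "1 - q i" \<delta>] by (auto simp: power_profile_def)

definition eigen_bracket :: "(real^'n \<Rightarrow> real^'n) \<Rightarrow> real \<Rightarrow> 'n set \<Rightarrow> bool" where
  "eigen_bracket f \<mu> S \<longleftrightarrow> (\<exists>v w. pos_vec v \<and> v \<le> w \<and>
     (\<forall>i\<in>S. \<mu> * v$i \<le> f v $ i \<and> f w $ i \<le> \<mu> * w$i))"

context admissible_map
begin

text \<open>The exponents are assigned one vertex at a time, using that every proper part of a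
  non-final class has an arc leaving it.\<close>

lemma exists_subsolution_exponents:
  fixes \<theta> :: real
  assumes C: "scc f C" "\<not> final_class f C" and CS: "\<And>i. i \<in> C \<Longrightarrow> D i \<subseteq> C \<union> S" "C \<inter> S = {}"
    and "0 < \<theta>" "\<theta> \<le> 1"
  obtains q where "\<And>k. k \<in> C \<Longrightarrow> 0 < q k \<and> q k \<le> \<theta> / 2 \<and> (\<exists>j\<in>D k. j \<in> S \<or> (j \<in> C \<and> q k < \<theta> * q j))"
proof -
  define P where "P T \<longleftrightarrow> (\<exists>q. \<forall>k\<in>T. 0 < q k \<and> q k \<le> \<theta> / 2 \<and>
      (\<exists>j\<in>D k. j \<in> S \<or> (j \<in> T \<and> q k < \<theta> * q j)))" for T
  have "P C"
  proof (rule finite_subset_grow_induct)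
    fix T assume "T \<subset> C" "P T"
    then obtain q where q: "\<And>k. k \<in> T \<Longrightarrow> 0 < q k \<and> q k \<le> \<theta> / 2 \<and>
        (\<exists>j\<in>D k. j \<in> S \<or> (j \<in> T \<and> q k < \<theta> * q j))"
      unfolding P_def by blast
    obtain k j where "k \<in> C" "k \<notin> T" "j \<in> D k" "j \<in> T \<or> j \<notin> C"
      using scc_exit_arc[OF C(1) \<open>T \<subset> C\<close>] C(2) by (auto simp: arc_iff)
    then have j: "j \<in> S \<or> (j \<in> T \<and> j \<notin> S)" using CS \<open>T \<subset> C\<close> by blast
    define q' where "q' = q(k := if j \<in> S then \<theta> / 2 else \<theta> * q j / 2)"
    have "P (insert k T)"
      unfolding P_def
    proof (intro exI ballI)
      fix l assume "l \<in> insert k T"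
      then consider "l = k" | "l \<in> T" "l \<noteq> k" by blast
      then show "0 < q' l \<and> q' l \<le> \<theta> / 2 \<and> (\<exists>j\<in>D l. j \<in> S \<or> (j \<in> insert k T \<and> q' l < \<theta> * q' j))"
      proof cases
        case 1
        show ?thesis
        proof (cases "j \<in> S")
          case True
          then show ?thesis
            using 1 \<open>j \<in> D k\<close> \<open>0 < \<theta>\<close> by (intro conjI bexI[of _ j]) (auto simp: q'_def)
        next
          case False
          then have "j \<in> T" "j \<noteq> k" using j \<open>k \<notin> T\<close> by auto
          then have "0 < q j" "q j \<le> 1" using q[of j] \<open>\<theta> \<le> 1\<close> by auto
          then have "0 < \<theta> * q j" "\<theta> * q j \<le> \<theta>"
            using \<open>0 < \<theta>\<close> mult_left_le[of "q j" \<theta>] by auto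
          then show ?thesis
            using 1 False \<open>j \<in> T\<close> \<open>j \<noteq> k\<close> \<open>j \<in> D k\<close> \<open>0 < q j\<close>
            by (intro conjI bexI[of _ j]) (auto simp: q'_def)
        qed
      next
        case 2
        then show ?thesis using q[OF \<open>l \<in> T\<close>] \<open>k \<notin> T\<close> by (auto simp: q'_def)
      qed
    qed
    then show "\<exists>T'. T \<subset> T' \<and> T' \<subseteq> C \<and> P T'"
      using \<open>k \<in> C\<close> \<open>k \<notin> T\<close> \<open>T \<subset> C\<close> by blast
  qed (auto simp: P_def)
  then show thesis using that unfolding P_def by blast
qed

text \<open>On a non-final class the subsolution is built from powers of a small \<delta>: a coordinate
  k gets \<delta> powr (1 - q k), and the growth bound along the chosen dependency of k beats
  \<mu> * \<delta> powr (1 - q k) as \<delta> tends to 0.\<close>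

lemma eventually_power_profile_subsolution:
  assumes CS: "\<And>i. i \<in> C \<Longrightarrow> D i \<subseteq> C \<union> S" "C \<inter> S = {}" and "0 < \<mu>" "pos_vec v"
    and "0 < \<kappa>" "0 < \<theta>" "\<theta> \<le> 1" and G: "\<And>i j. j \<in> D i \<Longrightarrow> power_growth (\<lambda>x. f x $ i) (D i) j \<kappa> \<theta>"
    and q: "\<And>k. k \<in> C \<Longrightarrow> 0 < q k \<and> q k \<le> \<theta> / 2 \<and> (\<exists>j\<in>D k. j \<in> S \<or> (j \<in> C \<and> q k < \<theta> * q j))"
    and "k \<in> C"
  shows "\<forall>\<^sub>F \<delta> in at_right 0. \<mu> * power_profile C q v \<delta> $ k \<le> f (power_profile C q v \<delta>) $ k"
proof -
  define V where "V = power_profile C q v"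
  obtain j where "j \<in> D k" and j: "j \<in> S \<or> (j \<in> C \<and> q k < \<theta> * q j)"
    using q[OF \<open>k \<in> C\<close>] by blast
  obtain m where "0 < m" and m: "\<And>l. m \<le> v$l" using pos_vec_min_bound[OF \<open>pos_vec v\<close>] by blast
  have lower: "\<kappa> * \<delta> powr (1 - \<theta>) * V \<delta> $ j powr \<theta> \<le> f (V \<delta>) $ k"
    if "0 < \<delta>" "\<delta> \<le> min 1 m" for \<delta>
  proof (rule power_growthD[OF G[OF \<open>j \<in> D k\<close>] _ \<open>0 < \<delta>\<close>])
    show "nonneg_vec (V \<delta>)"
      using power_profile_pos[OF \<open>pos_vec v\<close> \<open>0 < \<delta>\<close>] by (simp add: V_def pos_imp_nonneg_vec)
    fix l assume "l \<in> D k"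
    show "\<delta> \<le> V \<delta> $ l"
    proof (cases "l \<in> C")
      case True
      then show ?thesis using power_profile_bounds[OF True, of q \<delta> v] q[OF True] \<open>\<theta> \<le> 1\<close> that
        by (simp add: V_def)
    qed (use that m[of l] in \<open>simp add: V_def power_profile_def\<close>)
  qed
  have "\<forall>\<^sub>F \<delta> in at_right 0. \<mu> * V \<delta> $ k \<le> \<kappa> * \<delta> powr (1 - \<theta>) * V \<delta> $ j powr \<theta>"
  proof (cases "j \<in> S")
    case True
    then have "j \<notin> C" using CS(2) by blast
    have "0 < v$j" using \<open>pos_vec v\<close> by (simp add: pos_vec_def)
    have "\<forall>\<^sub>F \<delta> in at_right 0. \<mu> * \<delta> powr ((1 - \<theta>) + (\<theta> - q k)) \<le> (\<kappa> * v$j powr \<theta>) * \<delta> powr (1 - \<theta>)"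
      using q[OF \<open>k \<in> C\<close>] \<open>0 < \<mu>\<close> \<open>0 < \<kappa>\<close> \<open>0 < v$j\<close> by (intro eventually_powr_dominated) auto
    then show ?thesis
      by eventually_elim (use \<open>k \<in> C\<close> \<open>j \<notin> C\<close> in \<open>simp add: V_def power_profile_def algebra_simps\<close>)
  next
    case False
    then have "j \<in> C" "q k < \<theta> * q j" using j by auto
    have "\<forall>\<^sub>F \<delta> in at_right 0. \<mu> * \<delta> powr ((1 - \<theta> * q j) + (\<theta> * q j - q k)) \<le> \<kappa> * \<delta> powr (1 - \<theta> * q j)"
      using \<open>q k < \<theta> * q j\<close> \<open>0 < \<mu>\<close> \<open>0 < \<kappa>\<close> by (intro eventually_powr_dominated) auto
    then show ?thesis
    proof (rule eventually_mono)
      fix \<delta> :: real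
      assume "\<mu> * \<delta> powr ((1 - \<theta> * q j) + (\<theta> * q j - q k)) \<le> \<kappa> * \<delta> powr (1 - \<theta> * q j)"
      moreover have "\<delta> powr (1 - \<theta>) * (\<delta> powr (1 - q j)) powr \<theta> = \<delta> powr (1 - \<theta> * q j)"
        by (simp add: powr_powr powr_add[symmetric] algebra_simps)
      ultimately show "\<mu> * V \<delta> $ k \<le> \<kappa> * \<delta> powr (1 - \<theta>) * V \<delta> $ j powr \<theta>"
        using \<open>k \<in> C\<close> \<open>j \<in> C\<close> by (simp add: V_def power_profile_def algebra_simps)
    qed
  qed
  moreover have "\<forall>\<^sub>F \<delta> in at_right 0. 0 < \<delta> \<and> \<delta> \<le> min 1 m"
    using \<open>0 < m\<close> by (intro eventually_at_right_0_small) simp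
  ultimately show ?thesis
    unfolding V_def[symmetric] by eventually_elim (use lower in \<open>auto intro: order_trans\<close>)
qed

lemma subsolution_on_nonfinal_class:
  assumes S: "\<And>i. i \<in> S \<Longrightarrow> D i \<subseteq> S" and C: "scc f C" "\<not> final_class f C"
    and CS: "\<And>i. i \<in> C \<Longrightarrow> D i \<subseteq> C \<union> S" "C \<inter> S = {}" and "0 < \<mu>"
    and v: "pos_vec v" "\<And>i. i \<in> S \<Longrightarrow> \<mu> * v$i \<le> f v $ i"
  obtains v' where "pos_vec v'" "\<And>i. i \<notin> C \<Longrightarrow> v'$i = v$i" "\<And>i. i \<in> C \<Longrightarrow> v'$i \<le> 1"
    "\<And>i. i \<in> S \<union> C \<Longrightarrow> \<mu> * v'$i \<le> f v' $ i"
proof -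
  obtain \<kappa> \<theta> where "0 < \<kappa>" "0 < \<theta>" "\<theta> \<le> 1"
    and G: "\<And>i j. j \<in> D i \<Longrightarrow> power_growth (\<lambda>x. f x $ i) (D i) j \<kappa> \<theta>"
    using uniform_growth by blast
  obtain q where q: "\<And>k. k \<in> C \<Longrightarrow> 0 < q k \<and> q k \<le> \<theta> / 2 \<and> (\<exists>j\<in>D k. j \<in> S \<or> (j \<in> C \<and> q k < \<theta> * q j))"
    using exists_subsolution_exponents[OF C CS \<open>0 < \<theta>\<close> \<open>\<theta> \<le> 1\<close>] by blast
  define V where "V = power_profile C q v"
  have "\<forall>\<^sub>F \<delta> in at_right 0. (0 < \<delta> \<and> \<delta> \<le> 1) \<and> (\<forall>k\<in>C. \<mu> * V \<delta> $ k \<le> f (V \<delta>) $ k)"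
    unfolding V_def
    using eventually_power_profile_subsolution[OF CS \<open>0 < \<mu>\<close> v(1) \<open>0 < \<kappa>\<close> \<open>0 < \<theta>\<close> \<open>\<theta> \<le> 1\<close> G q]
    by (intro eventually_conj eventually_at_right_0_small eventually_ball_finite ballI) auto
  then obtain \<delta> where "0 < \<delta>" "\<delta> \<le> 1" and \<delta>: "\<And>k. k \<in> C \<Longrightarrow> \<mu> * V \<delta> $ k \<le> f (V \<delta>) $ k"
    using eventually_happens'[OF trivial_limit_at_right_real] by blast
  have V_pos: "pos_vec (V \<delta>)" using power_profile_pos[OF v(1) \<open>0 < \<delta>\<close>] by (simp add: V_def)
  show thesis
  proof (rule that[OF V_pos])
    show "V \<delta> $ i = v$i" if "i \<notin> C" for i using that by (simp add: V_def power_profile_def)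
    show "V \<delta> $ i \<le> 1" if "i \<in> C" for i
      using power_profile_bounds[OF that, of q \<delta> v] q[OF that] \<open>\<theta> \<le> 1\<close> \<open>0 < \<delta>\<close> \<open>\<delta> \<le> 1\<close>
      by (simp add: V_def)
    show "\<mu> * V \<delta> $ i \<le> f (V \<delta>) $ i" if "i \<in> S \<union> C" for i
    proof (cases "i \<in> C")
      case False
      then have "i \<in> S" using that by blast
      have "f (V \<delta>) $ i = f v $ i"
        using S[OF \<open>i \<in> S\<close>] CS(2) V_pos v(1)
        by (intro depends_on) (auto simp: V_def power_profile_def pos_imp_nonneg_vec)
      then show ?thesis using v(2)[OF \<open>i \<in> S\<close>] False by (simp add: V_def power_profile_def)
    qed (use \<delta> in blast)
  qed
qed

lemma eventually_perturbed_strict: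
  assumes "nonneg_vec x" "nonneg_vec w" "\<And>i. i \<in> C \<Longrightarrow> f x $ i < c i"
  shows "\<forall>\<^sub>F s in at_top. \<forall>i\<in>C. f (x + inverse s *\<^sub>R w) $ i < c i"
proof -
  have "((\<lambda>s. x + inverse s *\<^sub>R w) \<longlongrightarrow> x + 0 *\<^sub>R w) at_top"
    by (intro tendsto_intros tendsto_inverse_0_at_top filterlim_ident)
  moreover have "\<forall>\<^sub>F s in at_top. nonneg_vec (x + inverse s *\<^sub>R w)"
    using eventually_gt_at_top[of 0] by eventually_elim (use assms(1,2) in \<open>simp add: nonneg_vec_def\<close>)
  ultimately have "((\<lambda>s. f (x + inverse s *\<^sub>R w)) \<longlongrightarrow> f x) at_top"
    using assms(1) by (intro continuous_on_tendsto_compose[OF continuous]) auto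
  then show ?thesis
    using assms(3) by (intro eventually_ball_finite ballI order_tendstoD(2)[OF tendsto_vec_nth]) auto
qed

lemma supersolution_on_class:
  assumes S: "\<And>i. i \<in> S \<Longrightarrow> D i \<subseteq> S" and CS: "\<And>i. i \<in> C \<Longrightarrow> D i \<subseteq> C \<union> S" "C \<inter> S = {}"
    and "cone_r (restr0 f C) < \<mu>" and w: "pos_vec w" "\<And>i. i \<in> S \<Longrightarrow> f w $ i \<le> \<mu> * w$i"
  obtains w' where "pos_vec w'" "\<And>i. i \<notin> C \<Longrightarrow> w'$i = w$i" "\<And>i. i \<in> C \<Longrightarrow> 1 \<le> w'$i"
    "\<And>i. i \<in> S \<union> C \<Longrightarrow> f w' $ i \<le> \<mu> * w'$i"
proof -
  obtain x where x: "pos_vec x" "\<And>i. restr0 f C x $ i < \<mu> * x$i"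
    using cone_r_lessE[OF assms(4)] by blast
  obtain m where "0 < m" and m: "\<And>k. m \<le> x$k" using pos_vec_min_bound[OF x(1)] by blast
  define Z where "Z s = proj0 C x + inverse s *\<^sub>R proj0 S w" for s :: real
  have Z_nonneg: "nonneg_vec (Z s)" if "0 < s" for s
    using x(1) w(1) that by (auto simp: Z_def nonneg_vec_def proj0_def pos_vec_def less_imp_le)
  have "f (proj0 C x) $ i < \<mu> * x$i" if "i \<in> C" for i
    using x(2)[of i] that by (simp add: restr0_nth)
  then have "\<forall>\<^sub>F s in at_top. \<forall>i\<in>C. f (Z s) $ i < \<mu> * x$i"
    unfolding Z_def using x(1) w(1)
    by (intro eventually_perturbed_strict nonneg_vec_proj0 pos_imp_nonneg_vec)
  moreover have "\<forall>\<^sub>F s in at_top. max 1 (1 / m) \<le> s" by (rule eventually_ge_at_top)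
  ultimately have "\<forall>\<^sub>F s in at_top. (\<forall>i\<in>C. f (Z s) $ i < \<mu> * x$i) \<and> max 1 (1 / m) \<le> s"
    by (rule eventually_conj)
  then obtain s where s: "\<And>i. i \<in> C \<Longrightarrow> f (Z s) $ i < \<mu> * x$i" and "max 1 (1 / m) \<le> s"
    using eventually_happens'[OF trivial_limit_at_top_linorder] by blast
  then have "0 < s" "1 \<le> s * m" using \<open>0 < m\<close> by (auto simp: field_simps)
  define w' where "w' = (\<chi> i. if i \<in> C then s * x$i else w$i)"
  show thesis
  proof (rule that)
    show "pos_vec w'" using x(1) w(1) \<open>0 < s\<close> by (simp add: w'_def pos_vec_def)
    show "w'$i = w$i" if "i \<notin> C" for i using that by (simp add: w'_def)
    show "1 \<le> w'$i" if "i \<in> C" for i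
      using that m[of i] \<open>0 < s\<close> \<open>1 \<le> s * m\<close> by (simp add: w'_def) (smt (verit) mult_left_mono)
    show "f w' $ i \<le> \<mu> * w'$i" if "i \<in> S \<union> C" for i
    proof (cases "i \<in> C")
      case True
      have "f w' $ i = f (s *\<^sub>R Z s) $ i"
        using CS(1)[OF True] CS(2) \<open>0 < s\<close> x(1) w(1)
        by (intro depends_on nonneg_vec_scaleR Z_nonneg)
          (auto simp: w'_def Z_def proj0_def nonneg_vec_def pos_vec_def less_imp_le)
      also have "\<dots> = s * f (Z s) $ i" using homogeneous[OF Z_nonneg \<open>0 < s\<close>] \<open>0 < s\<close> by simp
      also have "\<dots> \<le> \<mu> * w'$i" using s[OF True] \<open>0 < s\<close> True by (simp add: w'_def)
      finally show ?thesis .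
    next
      case False
      then have "i \<in> S" using that by blast
      have "f w' $ i = f w $ i"
        using S[OF \<open>i \<in> S\<close>] CS(2) x(1) w(1) \<open>0 < s\<close>
        by (intro depends_on) (auto simp: w'_def nonneg_vec_def pos_vec_def less_imp_le)
      then show ?thesis using w(2)[OF \<open>i \<in> S\<close>] False by (simp add: w'_def)
    qed
  qed
qed

lemma eigen_bracket_final_class:
  assumes S: "\<And>i. i \<in> S \<Longrightarrow> D i \<subseteq> S" and C: "final_class f C" "C \<inter> S = {}"
    and "cone_r (restr0 f C) = \<mu>" and "eigen_bracket f \<mu> S"
  shows "eigen_bracket f \<mu> (S \<union> C)"
proof -
  obtain v w where vw: "pos_vec v" "v \<le> w" "\<And>i. i \<in> S \<Longrightarrow> \<mu> * v$i \<le> f v $ i \<and> f w $ i \<le> \<mu> * w$i"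
    using assms(5) by (auto simp: eigen_bracket_def)
  obtain u where u: "pos_vec u" "\<And>i. i \<in> C \<Longrightarrow> f u $ i = \<mu> * u$i"
    using eigvec_on_final_class[OF C(1)] assms(4) by blast
  have closed: "\<And>i. i \<in> C \<Longrightarrow> D i \<subseteq> C"
    using final_class_closed[OF C(1)] by (simp add: arc_closed_iff)
  have w_pos: "pos_vec w"
    using vw(1,2) by (auto simp: pos_vec_def less_eq_vec_def intro: less_le_trans)
  define glue where "glue z = (\<chi> i. if i \<in> C then u$i else z$i)" for z :: "real^'n"
  have glue_pos: "pos_vec (glue z)" if "pos_vec z" for z
    using u(1) that by (simp add: glue_def pos_vec_def)
  have glue: "f (glue z) $ i = (if i \<in> C then \<mu> * u$i else f z $ i)"
    if "pos_vec z" "i \<in> S \<union> C" for z i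
  proof -
    have "pos_vec (glue z)" using glue_pos[OF that(1)] .
    show "f (glue z) $ i = (if i \<in> C then \<mu> * u$i else f z $ i)"
    proof (cases "i \<in> C")
      case True
      have "f (glue z) $ i = f u $ i"
        using \<open>pos_vec (glue z)\<close> u(1)
        by (intro depends_on_closed[OF closed True]) (auto simp: glue_def pos_imp_nonneg_vec)
      then show ?thesis using True u(2) by simp
    next
      case False
      then have "i \<in> S" using that(2) by blast
      have "f (glue z) $ i = f z $ i"
        using \<open>pos_vec (glue z)\<close> that(1) C(2)
        by (intro depends_on_closed[OF S \<open>i \<in> S\<close>]) (auto simp: glue_def pos_imp_nonneg_vec)
      then show ?thesis using False by simp
    qed
  qed
  show ?thesis
    unfolding eigen_bracket_def
  proof (intro exI conjI ballI)
    show "pos_vec (glue v)" using glue_pos[OF vw(1)] .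
    show "glue v \<le> glue w" using vw(2) by (simp add: glue_def less_eq_vec_def)
    fix i assume "i \<in> S \<union> C"
    then show "\<mu> * glue v $ i \<le> f (glue v) $ i" "f (glue w) $ i \<le> \<mu> * glue w $ i"
      using glue[OF vw(1)] glue[OF w_pos] vw(3) by (auto simp: glue_def)
  qed
qed

lemma eigen_bracket_nonfinal_class:
  assumes S: "\<And>i. i \<in> S \<Longrightarrow> D i \<subseteq> S" and C: "scc f C" "\<not> final_class f C"
    and CS: "\<And>i. i \<in> C \<Longrightarrow> D i \<subseteq> C \<union> S" "C \<inter> S = {}"
    and "cone_r (restr0 f C) < \<mu>" "0 < \<mu>" and "eigen_bracket f \<mu> S"
  shows "eigen_bracket f \<mu> (S \<union> C)"
proof -
  obtain v w where vw: "pos_vec v" "v \<le> w" "\<And>i. i \<in> S \<Longrightarrow> \<mu> * v$i \<le> f v $ i \<and> f w $ i \<le> \<mu> * w$i"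
    using assms(8) by (auto simp: eigen_bracket_def)
  have w_pos: "pos_vec w"
    using vw(1,2) by (auto simp: pos_vec_def less_eq_vec_def intro: less_le_trans)
  obtain v' where v': "pos_vec v'" "\<And>i. i \<notin> C \<Longrightarrow> v'$i = v$i" "\<And>i. i \<in> C \<Longrightarrow> v'$i \<le> 1"
      "\<And>i. i \<in> S \<union> C \<Longrightarrow> \<mu> * v'$i \<le> f v' $ i"
    using subsolution_on_nonfinal_class[OF S C CS \<open>0 < \<mu>\<close> vw(1)] vw(3) by blast
  obtain w' where w': "pos_vec w'" "\<And>i. i \<notin> C \<Longrightarrow> w'$i = w$i" "\<And>i. i \<in> C \<Longrightarrow> 1 \<le> w'$i"
      "\<And>i. i \<in> S \<union> C \<Longrightarrow> f w' $ i \<le> \<mu> * w'$i"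
    using supersolution_on_class[OF S CS assms(6) w_pos] vw(3) by blast
  have "v' \<le> w'"
    unfolding less_eq_vec_def
  proof
    fix i show "v'$i \<le> w'$i"
      using v'(2,3)[of i] w'(2,3)[of i] vw(2) by (cases "i \<in> C") (auto simp: less_eq_vec_def)
  qed
  then show ?thesis unfolding eigen_bracket_def using v'(1,4) w'(4) by blast
qed

lemma strongly_nonneg_cone_r_pos: "strongly_nonneg f \<Longrightarrow> 0 < cone_r f"
  using exists_final_class cone_r_restr0_final_class_pos by (metis strongly_nonneg_def)

lemma eigen_bracket_next_class:
  assumes sn: "strongly_nonneg f" and "arc_closed f S" "S \<subset> UNIV" "eigen_bracket f (cone_r f) S"
  shows "\<exists>S'. S \<subset> S' \<and> arc_closed f S' \<and> eigen_bracket f (cone_r f) S'"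
proof -
  obtain C where C: "scc f C" "C \<inter> S = {}" "arc_closed f (S \<union> C)"
    using exists_next_class \<open>arc_closed f S\<close> \<open>S \<subset> UNIV\<close> by blast
  have S_closed: "\<And>i. i \<in> S \<Longrightarrow> D i \<subseteq> S" and CS: "\<And>i. i \<in> C \<Longrightarrow> D i \<subseteq> C \<union> S"
    using \<open>arc_closed f S\<close> C(3) by (auto simp: arc_closed_iff)
  have "eigen_bracket f (cone_r f) (S \<union> C)"
  proof (cases "final_class f C")
    case True
    then show ?thesis
      using eigen_bracket_final_class[OF S_closed True C(2)] sn assms(4) by (simp add: strongly_nonneg_def)
  next
    case False
    then show ?thesis
      using eigen_bracket_nonfinal_class[OF S_closed C(1) False CS C(2)] strongly_nonneg_cone_r_pos[OF sn]
        sn C(1) assms(4)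
      by (simp add: strongly_nonneg_def)
  qed
  moreover have "S \<subset> S \<union> C" using C(2) scc_nonempty[OF C(1)] by blast
  ultimately show ?thesis using C(3) by blast
qed

theorem strongly_nonneg_imp_eigvec:
  assumes "strongly_nonneg f"
  shows "\<exists>x. pos_eigvec f x"
proof -
  have "arc_closed f UNIV \<and> eigen_bracket f (cone_r f) UNIV"
  proof (rule finite_subset_grow_induct)
    show "arc_closed f {} \<and> eigen_bracket f (cone_r f) {}"
      using pos_vec_one by (auto simp: arc_closed_def eigen_bracket_def)
    fix S assume "S \<subset> UNIV" "arc_closed f S \<and> eigen_bracket f (cone_r f) S"
    then show "\<exists>S'. S \<subset> S' \<and> S' \<subseteq> UNIV \<and> arc_closed f S' \<and> eigen_bracket f (cone_r f) S'"
      using eigen_bracket_next_class[OF assms] by simp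
  qed simp
  then obtain v w where "pos_vec v" "v \<le> w" "cone_r f *\<^sub>R v \<le> f v" "f w \<le> cone_r f *\<^sub>R w"
    by (auto simp: eigen_bracket_def less_eq_vec_def)
  then obtain y where "pos_vec y" "f y = cone_r f *\<^sub>R y"
    using eigvec_between[OF strongly_nonneg_cone_r_pos[OF assms]] by blast
  then show ?thesis by (auto simp: pos_eigvec_def)
qed

end

theorem theorem7p1:
  fixes f :: "real^'n \<Rightarrow> real^'n"
  assumes "f \<in> Mplus_cl"
  shows "((\<exists>x. pos_eigvec f x) \<longleftrightarrow> strongly_nonneg f) \<and>
         ((\<exists>x. pos_eigvec f x) \<longrightarrow>
            ((\<forall>x y. pos_eigvec f x \<and> pos_eigvec f y \<longrightarrow> (\<exists>c. y = c *\<^sub>R x))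
             \<longleftrightarrow> (\<exists>!C. final_class f C)))"
proof -
  obtain D where "admissible_map f D" using admissible_map_Mplus_cl[OF assms] by blast
  then interpret admissible_map f D .
  show ?thesis
  proof (intro conjI impI iffI)
    show "strongly_nonneg f" if "\<exists>x. pos_eigvec f x"
      using that eigvec_imp_strongly_nonneg by blast
    show "\<exists>x. pos_eigvec f x" if "strongly_nonneg f"
      using that by (rule strongly_nonneg_imp_eigvec)
  next
    assume "\<exists>x. pos_eigvec f x"
    then obtain x where x: "pos_eigvec f x" ..
    show "\<exists>!C. final_class f C" if "\<forall>x y. pos_eigvec f x \<and> pos_eigvec f y \<longrightarrow> (\<exists>c. y = c *\<^sub>R x)"
      using x that by (rule unique_final_class_if_eigvec_unique)
    show "\<forall>x y. pos_eigvec f x \<and> pos_eigvec f y \<longrightarrow> (\<exists>c. y = c *\<^sub>R x)" if "\<exists>!C. final_class f C"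
      using eigvec_unique_if_unique_final_class[OF that] by blast
  qed
qed

end
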